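(* Consider problem (rank-MOA) $\min\{f(X):\mathcal{A}(X)=b,\ \operatorname{rank}(X)\le r\}$ and let $X\in\mathcal{L}\cap\mathcal{M}(r)$ with $s=\operatorname{rank}(X)$ and SVD $X=U\Sigma V^\top$ as in the context. (i) Suppose $X$ is a local minimizer of (rank-MOA). If either $s=r$ and Assumption 1 holds at $X$, or $s<r$ and Assumption 2 holds at $X$, then $X$ is an $F$-stationary point of (rank-MOA). (ii) Suppose $f$ is convex and $X$ is an $F$-stationary point of (rank-MOA). If $s=r$, then $f(X)\le f(Y)$ for all $Y\in\mathcal{L}\cap\mathcal{M}_X(\Gamma)$, where $\mathcal{M}_X(\Gamma)=\{UBV_\Gamma^\top:B\in\mathbb{R}^{m\times r}\}$. If $s<r$, then $X$ is a global minimizer of (rank-MOA).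
   Context: $0\le r<n\le m$. $\langle X,Y\rangle=\sum_{i,j}X_{ij}Y_{ij}$. $f:\mathbb{R}^{m\times n}\to\mathbb{R}$ continuously differentiable; $A^1,\dots,A^l\in\mathbb{R}^{m\times n}$, $b\in\mathbb{R}^l$, $\mathcal{A}(X)=(\langle A^1,X\rangle,\dots,\langle A^l,X\rangle)^\top$, $\mathcal{L}=\{X:\mathcal{A}(X)=b\}$, $\mathcal{M}(r)=\{X:\operatorname{rank}X\le r\}$. Lagrangian $L(X;y)=f(X)+\sum_{i=1}^ly_i(\langle A^i,X\rangle-b_i)$. For closed $\Omega$, $X\in\Omega$: $\mathrm{T}^B_\Omega(X)$ is the set of $\Xi$ with $X^k\in\Omega$, $X^k\to X$, $t_k\downarrow0$, $(X^k-X)/t_k\to\Xi$; $\mathrm{N}^F_\Omega(X)=\{Y:\langle Y,\Xi\rangle\le0\ \forall\Xi\in\mathrm{T}^B_\Omega(X)\}$. $X$ is an $F$-stationary point of (rank-MOA) if $X\in\mathcal{M}(r)$ and there is $y\in\mathbb{R}^l$ with $\mathcal{A}(X)=b$ and $-\nabla_XL(X;y)\in\mathrm{N}^F_{\mathcal{M}(r)}(X)$. SVD convention: $X=U\Sigma V^\top$, $U$, $V$ orthogonal of sizes $m$, $n$, $\Sigma$ with diagonal $\sigma_1\ge\dots\ge\sigma_s>0$ followed by zeros, $\Gamma=\{1,\dots,s\}$, $\Gamma_m^\perp=\{s+1,\dots,m\}$, $\Gamma_n^\perp=\{s+1,\dots,n\}$, $U_J,V_J$ column submatrices indexed by $J$.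 $T^i_X=\begin{bmatrix}U_\Gamma^\top A^iV_\Gamma & U_\Gamma^\top A^iV_{\Gamma_n^\perp}\\ U_{\Gamma_m^\perp}^\top A^iV_\Gamma & O\end{bmatrix}$, $R^i_X=U^\top A^iV_\Gamma$. Assumption 1 at $X$: $T^1_X,\dots,T^l_X$ linearly independent. Assumption 2 at $X$: $R^1_X,\dots,R^l_X$ linearly independent. *)

theory Defs
  imports "HOL-Analysis.Analysis"
begin

text \<open>Matrices in R^{m x n} are rendered as real^'n^'m (rows indexed by 'm, columns by 'n).
  The inner product on this type is the Frobenius inner product sum_ij X_ij Y_ij.
  Constraint families A^1..A^l, b, y are indexed by 0..<l.\<close>

definition feas_L :: "nat \<Rightarrow> (nat \<Rightarrow> real^'n^'m) \<Rightarrow> (nat \<Rightarrow> real) \<Rightarrow> (real^'n^'m) set" where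
  "feas_L l A b = {X. \<forall>i<l. A i \<bullet> X = b i}"

definition rank_le :: "nat \<Rightarrow> (real^'n^'m) set" where
  "rank_le r = {X. rank X \<le> r}"

definition bouligand_tangent :: "'a::real_normed_vector set \<Rightarrow> 'a \<Rightarrow> 'a set" where
  "bouligand_tangent \<Omega> X = {\<Xi>. \<exists>Xk t. (\<forall>k. Xk k \<in> \<Omega>) \<and> Xk \<longlonglongrightarrow> X \<and>
      (\<forall>k. t k > (0::real)) \<and> t \<longlonglongrightarrow> 0 \<and> (\<lambda>k. (Xk k - X) /\<^sub>R t k) \<longlonglongrightarrow> \<Xi>}"

definition frechet_normal :: "'a::real_inner set \<Rightarrow> 'a \<Rightarrow> 'a set" where
  "frechet_normal \<Omega> X = {Y. \<forall>\<Xi>\<in>bouligand_tangent \<Omega> X. Y \<bullet> \<Xi> \<le> 0}"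

definition grad :: "('a::real_inner \<Rightarrow> real) \<Rightarrow> 'a \<Rightarrow> 'a" where
  "grad f X = (SOME g. (f has_derivative (\<lambda>H. g \<bullet> H)) (at X))"

definition cont_diff :: "('a::real_inner \<Rightarrow> real) \<Rightarrow> bool" where
  "cont_diff f \<longleftrightarrow> (\<forall>X. f differentiable (at X)) \<and> continuous_on UNIV (grad f)"

text \<open>Gradient in X of the Lagrangian L(X;y) = f(X) + sum_i y_i (<A^i,X> - b_i).\<close>
definition lagr_grad :: "('a::real_inner \<Rightarrow> real) \<Rightarrow> nat \<Rightarrow> (nat \<Rightarrow> 'a) \<Rightarrow> (nat \<Rightarrow> real) \<Rightarrow> 'a \<Rightarrow> 'a" where
  "lagr_grad f l A y X = grad f X + (\<Sum>i<l. y i *\<^sub>R A i)"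

definition F_stationary :: "(real^'n^'m \<Rightarrow> real) \<Rightarrow> nat \<Rightarrow> (nat \<Rightarrow> real^'n^'m) \<Rightarrow> (nat \<Rightarrow> real) \<Rightarrow> nat \<Rightarrow> real^'n^'m \<Rightarrow> bool" where
  "F_stationary f l A b r X \<longleftrightarrow> X \<in> rank_le r \<and>
     (\<exists>y. X \<in> feas_L l A b \<and> - lagr_grad f l A y X \<in> frechet_normal (rank_le r) X)"

definition local_min_on :: "('a::metric_space \<Rightarrow> real) \<Rightarrow> 'a set \<Rightarrow> 'a \<Rightarrow> bool" where
  "local_min_on f S X \<longleftrightarrow> X \<in> S \<and> (\<exists>e>0. \<forall>Y\<in>S. dist Y X < e \<longrightarrow> f X \<le> f Y)"

definition global_min_on :: "('a \<Rightarrow> real) \<Rightarrow> 'a set \<Rightarrow> 'a \<Rightarrow> bool" where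
  "global_min_on f S X \<longleftrightarrow> X \<in> S \<and> (\<forall>Y\<in>S. f X \<le> f Y)"

definition lin_indep_family :: "nat \<Rightarrow> (nat \<Rightarrow> 'a::real_vector) \<Rightarrow> bool" where
  "lin_indep_family l T \<longleftrightarrow> (\<forall>c. (\<Sum>i<l. c i *\<^sub>R T i) = 0 \<longrightarrow> (\<forall>i<l. c i = 0))"

text \<open>SVD convention: em, en enumerate the row / column indices (position k = em k, en k).\<close>
definition is_svd :: "(nat \<Rightarrow> 'm::finite) \<Rightarrow> (nat \<Rightarrow> 'n::finite) \<Rightarrow> real^'n^'m \<Rightarrow> real^'m^'m \<Rightarrow> real^'n^'m \<Rightarrow> real^'n^'n \<Rightarrow> nat \<Rightarrow> bool" where
  "is_svd em en X U S V s \<longleftrightarrow>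
     orthogonal_matrix U \<and> orthogonal_matrix V \<and> X = U ** S ** transpose V \<and>
     (\<forall>i<CARD('m). \<forall>j<CARD('n). i \<noteq> j \<longrightarrow> S $ em i $ en j = 0) \<and>
     (\<forall>i<s. S $ em i $ en i > 0) \<and>
     (\<forall>i j. i \<le> j \<longrightarrow> j < s \<longrightarrow> S $ em j $ en j \<le> S $ em i $ en i) \<and>
     (\<forall>i. s \<le> i \<longrightarrow> i < CARD('n) \<longrightarrow> S $ em i $ en i = 0)"

text \<open>T^i_X, written as an m x n matrix: U^T A^i V with the (Gamma_m^perp, Gamma_n^perp) block set to 0.\<close>
definition T_mat :: "(nat \<Rightarrow> 'm::finite) \<Rightarrow> (nat \<Rightarrow> 'n::finite) \<Rightarrow> nat \<Rightarrow> real^'m^'m \<Rightarrow> real^'n^'n \<Rightarrow> real^'n^'m \<Rightarrow> real^'n^'m" where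
  "T_mat em en s U V Ai = (\<chi> p q. if p \<notin> em ` {..<s} \<and> q \<notin> en ` {..<s} then 0
                                    else (transpose U ** Ai ** V) $ p $ q)"

text \<open>R^i_X = U^T A^i V_Gamma (m x s), embedded as an m x n matrix by zero columns outside Gamma_n.\<close>
definition R_mat :: "(nat \<Rightarrow> 'm::finite) \<Rightarrow> (nat \<Rightarrow> 'n::finite) \<Rightarrow> nat \<Rightarrow> real^'m^'m \<Rightarrow> real^'n^'n \<Rightarrow> real^'n^'m \<Rightarrow> real^'n^'m" where
  "R_mat em en s U V Ai = (\<chi> p q. if q \<in> en ` {..<s} then (transpose U ** Ai ** V) $ p $ q else 0)"

text \<open>M_X(Gamma) = {U B V_Gamma^T : B m x s} = {U B' V^T : B' has zero columns outside Gamma_n}.\<close>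
definition M_Gamma :: "(nat \<Rightarrow> 'n::finite) \<Rightarrow> nat \<Rightarrow> real^'m^'m \<Rightarrow> real^'n^'n \<Rightarrow> (real^'n^'m::finite) set" where
  "M_Gamma en s U V = {U ** B ** transpose V | B. \<forall>p q. q \<notin> en ` {..<s} \<longrightarrow> B $ p $ q = 0}"

end

theory Submission
  imports Defs
begin

text \<open>In the coordinates Y \<mapsto> U^T Y V the point X becomes the monomial matrix S = \<Sigma>.
  If s < r, adding one entry outside the column support of S stays inside M(r): optimality along
  these straight lines, with Assumption 2 supplying multipliers on the support columns, makes the
  Lagrangian gradient vanish, and the same lines show that the Frechet normal cone is trivial, so
  convexity gives global optimality. If s = r, tangent directions of M(r) at X vanish on the block
  of zero rows and zero columns of S, while every direction H vanishing there and satisfying the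
  linearized constraints is the velocity of a feasible curve (S + G) S^+ (S + G J) of rank at
  most s, the constraints being restored by a Brouwer fixed point (Assumption 1). Part (ii) for
  s = r is the gradient inequality of f along the segments from X inside M_X(\<Gamma>), which are
  tangent to M(r).\<close>

lemma inner_matrix_eq_sum: "(M::real^'n^'m) \<bullet> N = (\<Sum>i\<in>UNIV. \<Sum>j\<in>UNIV. M$i$j * N$i$j)"
  by (simp add: inner_vec_def)

lemma inner_matrix_mult_left:
  fixes A :: "real^'m^'k" and Z :: "real^'n^'m" and Y :: "real^'n^'k"
  shows "(A ** Z) \<bullet> Y = Z \<bullet> (transpose A ** Y)"
proof -
  have "(A ** Z) \<bullet> Y = (\<Sum>i\<in>UNIV. \<Sum>j\<in>UNIV. \<Sum>k\<in>UNIV. A$i$k * Z$k$j * Y$i$j)"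
    unfolding inner_matrix_eq_sum matrix_matrix_mult_def by (simp add: sum_distrib_right)
  also have "\<dots> = (\<Sum>i\<in>UNIV. \<Sum>k\<in>UNIV. \<Sum>j\<in>UNIV. A$i$k * Z$k$j * Y$i$j)"
    by (rule sum.cong[OF refl], rule sum.swap)
  also have "\<dots> = (\<Sum>k\<in>UNIV. \<Sum>i\<in>UNIV. \<Sum>j\<in>UNIV. A$i$k * Z$k$j * Y$i$j)"
    by (rule sum.swap)
  also have "\<dots> = (\<Sum>k\<in>UNIV. \<Sum>j\<in>UNIV. \<Sum>i\<in>UNIV. A$i$k * Z$k$j * Y$i$j)"
    by (rule sum.cong[OF refl], rule sum.swap)
  also have "\<dots> = Z \<bullet> (transpose A ** Y)"
    unfolding inner_matrix_eq_sum matrix_matrix_mult_def transpose_def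
    by (simp add: sum_distrib_left mult_ac)
  finally show ?thesis .
qed

lemma inner_matrix_mult_right:
  fixes B :: "real^'k^'n" and Z :: "real^'n^'m" and Y :: "real^'k^'m"
  shows "(Z ** B) \<bullet> Y = Z \<bullet> (Y ** transpose B)"
proof -
  have "(Z ** B) \<bullet> Y = (\<Sum>i\<in>UNIV. \<Sum>j\<in>UNIV. \<Sum>k\<in>UNIV. Z$i$k * B$k$j * Y$i$j)"
    unfolding inner_matrix_eq_sum matrix_matrix_mult_def by (simp add: sum_distrib_right)
  also have "\<dots> = (\<Sum>i\<in>UNIV. \<Sum>k\<in>UNIV. \<Sum>j\<in>UNIV. Z$i$k * B$k$j * Y$i$j)"
    by (rule sum.cong[OF refl], rule sum.swap)
  also have "\<dots> = Z \<bullet> (Y ** transpose B)"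
    unfolding inner_matrix_eq_sum matrix_matrix_mult_def transpose_def
    by (simp add: sum_distrib_left mult_ac)
  finally show ?thesis .
qed

lemma bilinear_matrix_mult: "bilinear (\<lambda>(A::real^'k^'m) (B::real^'n^'k). A ** B)"
  unfolding bilinear_def
  by (auto intro!: linearI simp: vec_eq_iff matrix_matrix_mult_def sum.distrib
      sum_distrib_left algebra_simps)

lemma bilinear_matrix_vector_mult: "bilinear (\<lambda>(A::real^'n^'m) (x::real^'n). A *v x)"
  unfolding bilinear_def
  by (auto intro!: linearI simp: vec_eq_iff matrix_vector_mult_def sum.distrib
      sum_distrib_left algebra_simps)

lemmas bounded_bilinear_matrix_mult =
  bilinear_conv_bounded_bilinear[THEN iffD1, OF bilinear_matrix_mult]
lemmas bounded_bilinear_matrix_vector_mult =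
  bilinear_conv_bounded_bilinear[THEN iffD1, OF bilinear_matrix_vector_mult]

lemma matrix_mult_norm_bound:
  "\<exists>B>0. \<forall>(A::real^'k^'m) (C::real^'n^'k). norm (A ** C) \<le> B * norm A * norm C"
  using bilinear_bounded_pos[OF bilinear_matrix_mult] by blast

lemma matrix_vector_mult_norm_bound:
  "\<exists>B>0. \<forall>(A::real^'n^'m) (x::real^'n). norm (A *v x) \<le> B * norm A * norm x"
  using bilinear_bounded_pos[OF bilinear_matrix_vector_mult] by blast

lemmas matrix_add_rdistrib = bilinear_ladd[OF bilinear_matrix_mult, simplified]
lemmas matrix_diff_ldistrib = bilinear_rsub[OF bilinear_matrix_mult, simplified]
lemmas matrix_scaleR_left = bilinear_lmul[OF bilinear_matrix_mult, simplified]
lemmas matrix_scaleR_right = bilinear_rmul[OF bilinear_matrix_mult, simplified]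

lemma sum_delta_conj:
  "(\<Sum>k\<in>(UNIV::'a::finite set). if k = a \<and> Q k then c k else 0) = (if Q a then c a else 0)"
  "(\<Sum>k\<in>(UNIV::'a::finite set). if a = k \<and> Q k then c k else 0) = (if Q a then c a else 0)"
proof -
  show "(\<Sum>k\<in>(UNIV::'a set). if k = a \<and> Q k then c k else 0) = (if Q a then c a else 0)"
    by (subst sum.cong[OF refl, where h = "\<lambda>k. if k = a then (if Q a then c a else 0) else 0"]) auto
  then show "(\<Sum>k\<in>(UNIV::'a set). if a = k \<and> Q k then c k else 0) = (if Q a then c a else 0)"
    by (simp add: eq_commute)
qed

definition diag_mask :: "('a::finite \<Rightarrow> bool) \<Rightarrow> real^'a^'a" where
  "diag_mask P = (\<chi> i j. if i = j \<and> P i then 1 else 0)"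

lemma diag_mask_mult: "diag_mask P ** (M::real^'n^'m) = (\<chi> i j. if P i then M$i$j else 0)"
  unfolding diag_mask_def matrix_matrix_mult_def
  by (simp add: vec_eq_iff if_distrib[of "\<lambda>x. x * _"] sum_delta_conj cong: if_cong)

lemma matrix_mult_diag_mask: "(M::real^'n^'m) ** diag_mask P = (\<chi> i j. if P j then M$i$j else 0)"
  unfolding diag_mask_def matrix_matrix_mult_def
  by (simp add: vec_eq_iff if_distrib[of "\<lambda>x. _ * x"] sum_delta_conj cong: if_cong)

lemma transpose_diag_mask [simp]: "transpose (diag_mask P) = diag_mask P"
  unfolding diag_mask_def transpose_def by (simp add: vec_eq_iff)

lemma diag_mask_idem [simp]: "diag_mask P ** diag_mask P = diag_mask P"
  unfolding diag_mask_mult by (simp add: diag_mask_def vec_eq_iff)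

definition matrix_unit :: "'m \<Rightarrow> 'n \<Rightarrow> real^'n^'m" where
  "matrix_unit p q = (\<chi> i j. if i = p \<and> j = q then 1 else 0)"

lemma inner_matrix_unit: "(M::real^'n^'m) \<bullet> matrix_unit p q = M$p$q"
proof -
  have "M \<bullet> matrix_unit p q = (\<Sum>i\<in>UNIV. \<Sum>j\<in>UNIV. if i = p \<and> j = q then M$i$j else 0)"
    unfolding inner_matrix_eq_sum matrix_unit_def by (auto intro!: sum.cong)
  also have "\<dots> = (\<Sum>i\<in>UNIV. if i = p then M$i$q else 0)"
    by (intro sum.cong refl) (auto simp: if_distrib sum_delta_conj cong: if_cong)
  finally show ?thesis by simp
qed

lemma rank_le_card_nonzero_columns:
  fixes M :: "real^'n^'m"
  assumes "\<And>i j. \<not> P j \<Longrightarrow> M$i$j = 0"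
  shows "rank M \<le> card {j. P j}"
proof -
  have "columns M \<subseteq> span ((\<lambda>j. column j M) ` {j. P j})"
  proof
    fix x assume "x \<in> columns M"
    then obtain j where j: "x = column j M" unfolding columns_def by blast
    show "x \<in> span ((\<lambda>j. column j M) ` {j. P j})"
    proof (cases "P j")
      case True then show ?thesis using j by (auto intro: span_base)
    next
      case False
      then have "x = 0" using j assms by (simp add: column_def vec_eq_iff)
      then show ?thesis by (simp add: span_zero)
    qed
  qed
  then have "dim (columns M) \<le> card ((\<lambda>j. column j M) ` {j. P j})"
    by (intro dim_le_card) auto
  also have "\<dots> \<le> card {j. P j}" by (rule card_image_le) simp
  finally show ?thesis by (simp add: column_rank_def)
qed

lemma card_Collect_or_eq_le: "card {j::'a::finite. P j \<or> j = q} \<le> card {j. P j} + 1"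
proof -
  have "{j. P j \<or> j = q} = insert q {j. P j}" by auto
  then show ?thesis by (simp add: card_insert_if)
qed

definition nonzero_row :: "real^'n^'m \<Rightarrow> 'm \<Rightarrow> bool" where
  "nonzero_row S p \<longleftrightarrow> (\<exists>q. S$p$q \<noteq> 0)"

definition nonzero_col :: "real^'n^'m \<Rightarrow> 'n \<Rightarrow> bool" where
  "nonzero_col S q \<longleftrightarrow> (\<exists>p. S$p$q \<noteq> 0)"

definition monomial :: "real^'n^'m \<Rightarrow> bool" where
  "monomial S \<longleftrightarrow> (\<forall>p q q'. S$p$q \<noteq> 0 \<longrightarrow> S$p$q' \<noteq> 0 \<longrightarrow> q = q') \<and>
                    (\<forall>p p' q. S$p$q \<noteq> 0 \<longrightarrow> S$p'$q \<noteq> 0 \<longrightarrow> p = p')"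

definition monomial_pinv :: "real^'n^'m \<Rightarrow> real^'m^'n" where
  "monomial_pinv S = (\<chi> q p. if S$p$q \<noteq> 0 then 1 / S$p$q else 0)"

lemma sum_eq_single:
  assumes "finite A" "a \<in> A" "\<And>x. x \<in> A \<Longrightarrow> x \<noteq> a \<Longrightarrow> f x = 0"
  shows "sum f A = f a"
  using assms sum.remove[of A a f] sum.neutral[of "A - {a}" f] by auto

context
  fixes S :: "real^'n^'m"
  assumes mono: "monomial S"
begin

lemma monomial_row_unique: "S$p$q \<noteq> 0 \<Longrightarrow> S$p$q' \<noteq> 0 \<Longrightarrow> q = q'"
  using mono unfolding monomial_def by blast

lemma monomial_col_unique: "S$p$q \<noteq> 0 \<Longrightarrow> S$p'$q \<noteq> 0 \<Longrightarrow> p = p'"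
  using mono unfolding monomial_def by blast

lemma monomial_mult_pinv: "S ** monomial_pinv S = diag_mask (nonzero_row S)"
proof -
  have "(\<Sum>q\<in>UNIV. S$p$q * monomial_pinv S$q$p') = (if p = p' \<and> nonzero_row S p then 1 else 0)"
    for p p'
  proof (cases "nonzero_row S p")
    case True
    then obtain q0 where q0: "S$p$q0 \<noteq> 0" unfolding nonzero_row_def by blast
    have "(\<Sum>q\<in>UNIV. S$p$q * monomial_pinv S$q$p') = S$p$q0 * monomial_pinv S$q0$p'"
      by (rule sum_eq_single) (use monomial_row_unique[OF q0] in auto)
    also have "\<dots> = (if p = p' then 1 else 0)"
      using q0 monomial_col_unique[OF q0, of p'] by (auto simp: monomial_pinv_def)
    finally show ?thesis using True by simp
  qed (auto simp: nonzero_row_def)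
  then show ?thesis by (simp add: matrix_matrix_mult_def diag_mask_def vec_eq_iff)
qed

lemma pinv_mult_monomial: "monomial_pinv S ** S = diag_mask (nonzero_col S)"
proof -
  have "(\<Sum>p\<in>UNIV. monomial_pinv S$q$p * S$p$q') = (if q = q' \<and> nonzero_col S q then 1 else 0)"
    for q q'
  proof (cases "nonzero_col S q")
    case True
    then obtain p0 where p0: "S$p0$q \<noteq> 0" unfolding nonzero_col_def by blast
    have "(\<Sum>p\<in>UNIV. monomial_pinv S$q$p * S$p$q') = monomial_pinv S$q$p0 * S$p0$q'"
      by (rule sum_eq_single) (use monomial_col_unique[OF p0] in \<open>auto simp: monomial_pinv_def\<close>)
    also have "\<dots> = (if q = q' then 1 else 0)"
      using p0 monomial_row_unique[OF p0, of q'] by (auto simp: monomial_pinv_def)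
    finally show ?thesis using True by simp
  qed (auto simp: nonzero_col_def monomial_pinv_def)
  then show ?thesis by (simp add: matrix_matrix_mult_def diag_mask_def vec_eq_iff)
qed

lemma diag_mask_nonzero_row_mult: "diag_mask (nonzero_row S) ** S = S"
  by (auto simp: diag_mask_mult vec_eq_iff nonzero_row_def)

end

lemma rank_monomial_pinv_le: "rank (monomial_pinv S) \<le> card {p. nonzero_row S p}"
  by (rule rank_le_card_nonzero_columns) (auto simp: monomial_pinv_def nonzero_row_def)

definition orth_rot :: "real^'m^'m \<Rightarrow> real^'n^'n \<Rightarrow> real^'n^'m \<Rightarrow> real^'n^'m" where
  "orth_rot U V Z = U ** Z ** transpose V"

lemma linear_orth_rot: "linear (orth_rot U V)"
  unfolding orth_rot_def
  by (auto intro!: linearI simp: matrix_add_ldistrib matrix_add_rdistrib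
      matrix_scaleR_left matrix_scaleR_right)

lemma inner_orth_rot: "orth_rot U V Z \<bullet> Y = Z \<bullet> orth_rot (transpose U) (transpose V) Y"
proof -
  have "orth_rot U V Z \<bullet> Y = (U ** Z) \<bullet> (Y ** V)"
    unfolding orth_rot_def using inner_matrix_mult_right[of "U ** Z" "transpose V" Y] by simp
  also have "\<dots> = Z \<bullet> (transpose U ** (Y ** V))" by (rule inner_matrix_mult_left)
  finally show ?thesis unfolding orth_rot_def by (simp add: matrix_mul_assoc)
qed

lemma rank_orth_rot_le: "rank (orth_rot U V Z) \<le> rank Z"
  unfolding orth_rot_def by (metis rank_mul_le_left rank_mul_le_right order_trans)

lemma orth_rot_transpose_cancel:
  assumes "orthogonal_matrix U" "orthogonal_matrix V"
  shows "orth_rot (transpose U) (transpose V) (orth_rot U V Z) = Z"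
proof -
  have "orth_rot (transpose U) (transpose V) (orth_rot U V Z) =
        (transpose U ** U) ** Z ** (transpose V ** V)"
    unfolding orth_rot_def by (simp add: matrix_mul_assoc)
  then show ?thesis using assms by (simp add: orthogonal_matrix)
qed

lemma orth_rot_cancel_transpose:
  assumes "orthogonal_matrix U" "orthogonal_matrix V"
  shows "orth_rot U V (orth_rot (transpose U) (transpose V) Y) = Y"
  using orth_rot_transpose_cancel[of "transpose U" "transpose V" Y] assms by simp

lemma norm_orth_rot:
  assumes "orthogonal_matrix U" "orthogonal_matrix V"
  shows "norm (orth_rot U V Z) = norm Z"
  using inner_orth_rot[of U V Z "orth_rot U V Z"] orth_rot_transpose_cancel[OF assms]
  by (simp add: norm_eq_sqrt_inner)

definition tangent_proj :: "real^'n^'m \<Rightarrow> real^'n^'m \<Rightarrow> real^'n^'m" where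
  "tangent_proj S G = (\<chi> p q. if nonzero_row S p \<or> nonzero_col S q then G$p$q else 0)"

definition curve_remainder :: "real^'n^'m \<Rightarrow> real^'n^'m \<Rightarrow> real^'n^'m" where
  "curve_remainder S G = G ** monomial_pinv S ** (G ** diag_mask (\<lambda>q. \<not> nonzero_col S q))"

text \<open>The left-hand side factors through the pseudo-inverse of S, which bounds its rank by rank S
  (rank_curve_le); the right-hand side is S plus a first-order and a quadratic term in G.\<close>

lemma curve_identity:
  assumes "monomial S"
  shows "(S + G) ** monomial_pinv S ** (S + G ** diag_mask (\<lambda>q. \<not> nonzero_col S q)) =
         S + tangent_proj S G + curve_remainder S G"
proof -
  let ?J = "diag_mask (\<lambda>q. \<not> nonzero_col S q)" and ?S' = "monomial_pinv S"
  have "(S + G) ** ?S' ** (S + G ** ?J) =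
        S ** ?S' ** S + G ** (?S' ** S) + (S ** ?S') ** (G ** ?J) + curve_remainder S G"
    unfolding curve_remainder_def
    by (simp add: matrix_add_ldistrib matrix_add_rdistrib matrix_mul_assoc algebra_simps)
  also have "\<dots> = S + G ** diag_mask (nonzero_col S) + diag_mask (nonzero_row S) ** (G ** ?J)
                  + curve_remainder S G"
    using assms by (simp add: monomial_mult_pinv pinv_mult_monomial diag_mask_nonzero_row_mult)
  also have "\<dots> = S + tangent_proj S G + curve_remainder S G"
    unfolding tangent_proj_def by (simp add: diag_mask_mult matrix_mult_diag_mask vec_eq_iff)
  finally show ?thesis .
qed

lemma rank_curve_le:
  assumes "monomial S"
  shows "rank (S + tangent_proj S G + curve_remainder S G) \<le> rank (monomial_pinv S)"
  unfolding curve_identity[OF assms, symmetric]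
  by (metis rank_mul_le_left rank_mul_le_right order_trans)

lemma curve_remainder_quadratic:
  fixes S :: "real^'n^'m"
  shows "\<exists>K. \<forall>G. norm (curve_remainder S G) \<le> K * norm G ^ 2"
proof -
  obtain B1 where B1: "B1 > 0"
    "\<forall>(A::real^'m^'m) (C::real^'n^'m). norm (A ** C) \<le> B1 * norm A * norm C"
    using matrix_mult_norm_bound by blast
  obtain B2 where B2: "B2 > 0"
    "\<forall>(A::real^'n^'m) (C::real^'m^'n). norm (A ** C) \<le> B2 * norm A * norm C"
    using matrix_mult_norm_bound by blast
  obtain B3 where B3: "B3 > 0"
    "\<forall>(A::real^'n^'m) (C::real^'n^'n). norm (A ** C) \<le> B3 * norm A * norm C"
    using matrix_mult_norm_bound by blast
  have "norm (curve_remainder S G) \<le>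
        B1 * B2 * B3 * norm (monomial_pinv S) * norm (diag_mask (\<lambda>q. \<not> nonzero_col S q)) *
        norm G ^ 2"
    for G
  proof -
    have "norm (curve_remainder S G) \<le> B1 * norm (G ** monomial_pinv S) *
            norm (G ** diag_mask (\<lambda>q. \<not> nonzero_col S q))"
      unfolding curve_remainder_def using B1 by blast
    also have "\<dots> \<le> B1 * (B2 * norm G * norm (monomial_pinv S)) *
            (B3 * norm G * norm (diag_mask (\<lambda>q. \<not> nonzero_col S q)))"
      using B1 B2 B3 by (intro mult_mono mult_left_mono) (auto simp: order_trans[OF norm_ge_zero])
    finally show ?thesis by (simp add: power2_eq_square mult_ac)
  qed
  then show ?thesis by blast
qed

lemma continuous_curve_remainder: "continuous_on UNIV (curve_remainder S)"
  unfolding curve_remainder_def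
  by (intro bounded_bilinear.continuous_on[OF bounded_bilinear_matrix_mult] continuous_intros)

lemma grad_has_derivative:
  fixes f :: "'a::euclidean_space \<Rightarrow> real"
  assumes "f differentiable (at X)"
  shows "(f has_derivative (\<lambda>H. grad f X \<bullet> H)) (at X)"
proof -
  obtain f' where f': "(f has_derivative f') (at X)"
    using assms unfolding differentiable_def by blast
  have lin: "linear f'" using has_derivative_linear[OF f'] .
  define g where "g = (\<Sum>b\<in>Basis. f' b *\<^sub>R b)"
  have "f' H = g \<bullet> H" for H
  proof -
    have "f' H = f' (\<Sum>b\<in>Basis. (H \<bullet> b) *\<^sub>R b)" by (simp add: euclidean_representation)
    also have "\<dots> = g \<bullet> H"
      unfolding g_def inner_sum_left inner_scaleR_left linear_sum[OF lin] linear_scale[OF lin]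
      by (intro sum.cong refl) (simp add: inner_commute)
    finally show ?thesis .
  qed
  then have "\<exists>g. (f has_derivative (\<lambda>H. g \<bullet> H)) (at X)" using f' by (metis ext)
  then show ?thesis unfolding grad_def by (rule someI_ex)
qed

lemma convex_on_gradient_ineq:
  fixes f :: "'a::real_inner \<Rightarrow> real"
  assumes cv: "convex_on UNIV f" and d: "(f has_derivative (\<lambda>H. g \<bullet> H)) (at X)"
  shows "f X + g \<bullet> (Y - X) \<le> f Y"
proof -
  define h where "h = (\<lambda>t::real. f (X + t *\<^sub>R (Y - X)))"
  have cvh: "convex_on UNIV h"
  proof (rule convex_onI)
    fix t x y :: real assume t: "t > 0" "t < 1"
    have "h ((1 - t) *\<^sub>R x + t *\<^sub>R y) =
          f ((1 - t) *\<^sub>R (X + x *\<^sub>R (Y - X)) + t *\<^sub>R (X + y *\<^sub>R (Y - X)))"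
      unfolding h_def by (simp add: algebra_simps)
    also have "\<dots> \<le> (1 - t) * h x + t * h y"
      unfolding h_def using convex_onD[OF cv, of t] t by simp
    finally show "h ((1 - t) *\<^sub>R x + t *\<^sub>R y) \<le> (1 - t) * h x + t * h y" .
  qed simp
  have "((\<lambda>t. X + t *\<^sub>R (Y - X)) has_derivative (\<lambda>t. t *\<^sub>R (Y - X))) (at 0)"
    by (auto intro!: derivative_eq_intros)
  moreover have "(f has_derivative (\<lambda>H. g \<bullet> H)) (at (X + 0 *\<^sub>R (Y - X)))"
    using d by simp
  ultimately have "(h has_derivative (\<lambda>t. g \<bullet> (t *\<^sub>R (Y - X)))) (at 0)"
    unfolding h_def by (rule has_derivative_compose)
  then have "(h has_field_derivative (g \<bullet> (Y - X))) (at 0)"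
    unfolding has_field_derivative_def by (rule has_derivative_eq_rhs) (auto simp: fun_eq_iff)
  from convex_on_imp_above_tangent[OF cvh _ _ _ this, of 1] show ?thesis
    unfolding h_def by simp
qed

lemma has_derivative_zero_if_quadratic_bound:
  fixes R :: "real \<Rightarrow> 'a::real_normed_vector"
  assumes bound: "\<And>t. norm (R t) \<le> C * t\<^sup>2"
  shows "(R has_derivative (\<lambda>_. 0)) (at 0)"
proof -
  have R0: "R 0 = 0" using bound[of 0] by simp
  have "norm (norm (R t) / norm t) \<le> C * \<bar>t\<bar>" for t
  proof (cases "t = 0")
    case False
    have "norm (R t) / \<bar>t\<bar> \<le> C * \<bar>t\<bar> * \<bar>t\<bar> / \<bar>t\<bar>"
      using bound[of t] by (intro divide_right_mono) (simp_all add: power2_eq_square mult.assoc)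
    then show ?thesis using False by simp
  qed (simp add: R0)
  moreover have "((\<lambda>t. C * \<bar>t\<bar>) \<longlongrightarrow> 0) (at (0::real))"
    using tendsto_mult_right_zero[OF tendsto_rabs_zero[OF tendsto_ident_at[of 0 UNIV]], of C]
    by simp
  ultimately have "((\<lambda>t. norm (R t) / norm t) \<longlongrightarrow> 0) (at 0)"
    by (rule Lim_null_comparison[OF always_eventually[OF allI]])
  then show ?thesis unfolding has_derivative_iff_norm by (simp add: R0)
qed

lemma local_min_curve_derivative_nonneg:
  fixes f :: "'a::real_inner \<Rightarrow> real"
  assumes d: "(f has_derivative (\<lambda>H. g \<bullet> H)) (at X)" and lm: "local_min_on f K X"
    and "\<delta> > 0"
    and curve: "\<And>t. 0 < t \<Longrightarrow> t < \<delta> \<Longrightarrow> \<exists>W. X + t *\<^sub>R \<Xi> + W \<in> K \<and> norm W \<le> C * t\<^sup>2"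
  shows "g \<bullet> \<Xi> \<ge> 0"
proof (rule ccontr)
  assume neg: "\<not> g \<bullet> \<Xi> \<ge> 0"
  have "\<forall>t. \<exists>W. 0 < t \<and> t < \<delta> \<longrightarrow> X + t *\<^sub>R \<Xi> + W \<in> K \<and> norm W \<le> C * t\<^sup>2"
    using curve by blast
  then obtain W where W: "\<And>t. 0 < t \<Longrightarrow> t < \<delta> \<Longrightarrow> X + t *\<^sub>R \<Xi> + W t \<in> K \<and> norm (W t) \<le> C * t\<^sup>2"
    by metis
  define R where "R t = (if 0 < t \<and> t < \<delta> then W t else 0)" for t
  define \<gamma> where "\<gamma> t = X + t *\<^sub>R \<Xi> + R t" for t
  have "norm (R t) \<le> \<bar>C\<bar> * t\<^sup>2" for t
  proof (cases "0 < t \<and> t < \<delta>")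
    case True
    have "C * t\<^sup>2 \<le> \<bar>C\<bar> * t\<^sup>2" by (rule mult_right_mono) auto
    moreover have "R t = W t" using True by (simp add: R_def)
    ultimately show ?thesis using W[of t] True by (metis order_trans)
  qed (auto simp: R_def)
  then have "(R has_derivative (\<lambda>_. 0)) (at 0)" by (rule has_derivative_zero_if_quadratic_bound)
  then have \<gamma>_deriv: "(\<gamma> has_derivative (\<lambda>t. t *\<^sub>R \<Xi>)) (at 0)"
    unfolding \<gamma>_def by (auto intro!: derivative_eq_intros)
  have \<gamma>0: "\<gamma> 0 = X" by (simp add: \<gamma>_def R_def)
  from has_derivative_compose[OF \<gamma>_deriv d[folded \<gamma>0]]
  have "((\<lambda>t. f (\<gamma> t)) has_real_derivative g \<bullet> \<Xi>) (at 0)"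
    unfolding has_field_derivative_def by (rule has_derivative_eq_rhs) (auto simp: fun_eq_iff)
  from has_real_derivative_neg_dec_right[OF this] neg
  obtain d where d: "d > 0" "\<And>h. 0 < h \<Longrightarrow> h < d \<Longrightarrow> f (\<gamma> h) < f X"
    using \<gamma>0 by auto
  obtain e where e: "e > 0" "\<And>Y. Y \<in> K \<Longrightarrow> dist Y X < e \<Longrightarrow> f X \<le> f Y"
    using lm unfolding local_min_on_def by blast
  have "(\<gamma> \<longlongrightarrow> X) (at_right 0)"
    using has_derivative_continuous[OF \<gamma>_deriv] \<gamma>0
    by (auto simp: continuous_at intro: tendsto_mono[OF at_le])
  from tendstoD[OF this e(1)]
  have "\<forall>\<^sub>F h in at_right 0. dist (\<gamma> h) X < e \<and> h \<in> {0<..<min d \<delta>}"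
    using d(1) \<open>\<delta> > 0\<close> by (intro eventually_conj eventually_at_right_real) auto
  then obtain h where "dist (\<gamma> h) X < e" "0 < h" "h < d" "h < \<delta>"
    using eventually_happens'[OF trivial_limit_at_right_real] by fastforce
  moreover have "\<gamma> h \<in> K" using W[of h] \<open>0 < h\<close> \<open>h < \<delta>\<close> by (simp add: \<gamma>_def R_def)
  ultimately show False using d(2) e(2) by fastforce
qed

lemma local_min_line_derivative_zero:
  fixes f :: "'a::real_inner \<Rightarrow> real"
  assumes d: "(f has_derivative (\<lambda>H. g \<bullet> H)) (at X)" and lm: "local_min_on f K X"
    and line: "\<And>t. X + t *\<^sub>R \<Xi> \<in> K"
  shows "g \<bullet> \<Xi> = 0"
proof -
  have "g \<bullet> \<Xi> \<ge> 0"
    by (rule local_min_curve_derivative_nonneg[OF d lm zero_less_one, where C = 0])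
       (use line in auto)
  moreover have "g \<bullet> (- \<Xi>) \<ge> 0"
    by (rule local_min_curve_derivative_nonneg[OF d lm zero_less_one, where C = 0])
       (use line[of "- _"] in auto)
  ultimately show ?thesis by simp
qed

lemma segment_in_bouligand_tangent:
  fixes X \<Xi> :: "'a::real_normed_vector"
  assumes "\<And>t. 0 < t \<Longrightarrow> t \<le> 1 \<Longrightarrow> X + t *\<^sub>R \<Xi> \<in> \<Omega>"
  shows "\<Xi> \<in> bouligand_tangent \<Omega> X"
proof -
  define t where "t k = 1 / (real k + 1)" for k
  have tpos: "t k > 0" and t1: "t k \<le> 1" for k unfolding t_def by simp_all
  have t0: "t \<longlonglongrightarrow> 0"
    unfolding t_def using LIMSEQ_Suc[OF lim_inverse_n'] by (simp add: add.commute)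
  define Xk where "Xk = (\<lambda>k. X + t k *\<^sub>R \<Xi>)"
  have "\<forall>k. Xk k \<in> \<Omega>" unfolding Xk_def using assms tpos t1 by blast
  moreover have "Xk \<longlonglongrightarrow> X"
    using tendsto_add[OF tendsto_const tendsto_scaleR[OF t0 tendsto_const], of X \<Xi>]
    by (simp add: Xk_def)
  moreover have "(\<lambda>k. (Xk k - X) /\<^sub>R t k) = (\<lambda>k. \<Xi>)"
    using tpos by (simp add: Xk_def fun_eq_iff less_imp_neq[THEN not_sym])
  ultimately show ?thesis
    unfolding bouligand_tangent_def using tpos t0
    by (intro CollectI exI[of _ Xk] exI[of _ t]) simp
qed

lemma bouligand_tangent_mono: "\<Omega> \<subseteq> \<Omega>' \<Longrightarrow> bouligand_tangent \<Omega> X \<subseteq> bouligand_tangent \<Omega>' X"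
  unfolding bouligand_tangent_def by blast

lemma bouligand_tangent_linear_image:
  assumes L: "bounded_linear L" and "\<Xi> \<in> bouligand_tangent \<Omega> X"
  shows "L \<Xi> \<in> bouligand_tangent (L ` \<Omega>) (L X)"
proof -
  obtain Xk t where "\<forall>k. Xk k \<in> \<Omega>" "Xk \<longlonglongrightarrow> X" "\<forall>k. t k > 0" "t \<longlonglongrightarrow> 0"
    "(\<lambda>k. (Xk k - X) /\<^sub>R t k) \<longlonglongrightarrow> \<Xi>"
    using assms(2) unfolding bouligand_tangent_def by blast
  note Xk = this
  have "(\<lambda>k. L ((Xk k - X) /\<^sub>R t k)) \<longlonglongrightarrow> L \<Xi>"
    using Xk(5) by (rule bounded_linear.tendsto[OF L])
  moreover have "L ((Xk k - X) /\<^sub>R t k) = (L (Xk k) - L X) /\<^sub>R t k" for k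
    using bounded_linear.linear[OF L] by (simp add: linear_diff linear_scale)
  ultimately have "(\<lambda>k. (L (Xk k) - L X) /\<^sub>R t k) \<longlonglongrightarrow> L \<Xi>" by simp
  moreover have "(\<lambda>k. L (Xk k)) \<longlonglongrightarrow> L X" using Xk(2) by (rule bounded_linear.tendsto[OF L])
  moreover have "\<forall>k. L (Xk k) \<in> L ` \<Omega>" using Xk(1) by blast
  ultimately show ?thesis
    unfolding bouligand_tangent_def using Xk(3,4)
    by (intro CollectI exI[of _ "\<lambda>k. L (Xk k)"] exI[of _ t]) simp
qed

lemma span_image_lessThan_lincomb:
  fixes v :: "nat \<Rightarrow> 'a::real_vector"
  assumes "x \<in> span (v ` {..<l})"
  shows "\<exists>c. x = (\<Sum>i<l. c i *\<^sub>R v i)"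
  using assms
proof (induction rule: span_induct_alt)
  case base
  show ?case by (rule exI[of _ "\<lambda>_. 0"]) simp
next
  case (step a x y)
  then obtain k c where k: "k < l" "x = v k" and c: "y = (\<Sum>i<l. c i *\<^sub>R v i)" by blast
  have "a *\<^sub>R x + y = (\<Sum>i<l. (if i = k then a else 0) *\<^sub>R v i) + (\<Sum>i<l. c i *\<^sub>R v i)"
    using k c by (simp add: if_distrib[of "\<lambda>a. a *\<^sub>R _"] cong: if_cong)
  then show ?case
    by (intro exI[of _ "\<lambda>i. (if i = k then a else 0) + c i"])
      (simp add: scaleR_add_left sum.distrib)
qed

lemma orthogonal_to_common_kernel_imp_lincomb:
  fixes a :: "nat \<Rightarrow> 'a::euclidean_space"
  assumes "\<And>x. (\<forall>i<l. a i \<bullet> x = 0) \<Longrightarrow> g \<bullet> x = 0"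
  shows "\<exists>c. g = (\<Sum>i<l. c i *\<^sub>R a i)"
proof -
  obtain y z where y: "y \<in> span (a ` {..<l})" and z: "\<And>w. w \<in> span (a ` {..<l}) \<Longrightarrow> orthogonal z w"
    and g: "g = y + z"
    using orthogonal_subspace_decomp_exists[of "a ` {..<l}" g] by blast
  have "\<forall>i<l. a i \<bullet> z = 0"
    using z by (metis orthogonal_def inner_commute span_base image_eqI lessThan_iff)
  then have "g \<bullet> z = 0" using assms by blast
  moreover have "y \<bullet> z = 0" using z[OF y] by (simp add: orthogonal_def inner_commute)
  ultimately have "z = 0" by (simp add: g inner_add_left)
  then show ?thesis using span_image_lessThan_lincomb[OF y] g by simp
qed

lemma inner_sum_dual_family:
  fixes a D :: "nat \<Rightarrow> 'a::real_inner"
  assumes "\<forall>i<l. \<forall>k<l. a i \<bullet> D k = (if i = k then 1 else 0)" "i < l"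
  shows "a i \<bullet> (\<Sum>k<l. c k *\<^sub>R D k) = c i"
proof -
  have "a i \<bullet> (\<Sum>k<l. c k *\<^sub>R D k) = (\<Sum>k<l. if k = i then c k else 0)"
    unfolding inner_sum_right using assms by (intro sum.cong) auto
  then show ?thesis using assms(2) by simp
qed

text \<open>Each member of an independent family has a nonzero component orthogonal to the others;
  rescaling it gives the dual vector.\<close>

lemma dual_family_exists:
  fixes R :: "nat \<Rightarrow> 'a::euclidean_space"
  assumes li: "lin_indep_family l R"
  shows "\<exists>D. \<forall>k<l. D k \<in> span (R ` {..<l}) \<and> (\<forall>i<l. R i \<bullet> D k = (if i = k then 1 else 0))"
proof -
  have "\<exists>d. k < l \<longrightarrow> d \<in> span (R ` {..<l}) \<and> (\<forall>i<l. R i \<bullet> d = (if i = k then 1 else 0))"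
    for k
  proof (cases "k < l")
    case k: True
    obtain y z where y: "y \<in> span (R ` ({..<l} - {k}))"
      and z: "\<And>w. w \<in> span (R ` ({..<l} - {k})) \<Longrightarrow> orthogonal z w"
      and Rk: "R k = y + z"
      using orthogonal_subspace_decomp_exists[of "R ` ({..<l} - {k})" "R k"] by blast
    have zR: "R i \<bullet> z = 0" if "i < l" "i \<noteq> k" for i
      using z[of "R i"] that by (auto simp: orthogonal_def inner_commute intro: span_base)
    have zRk: "R k \<bullet> z = z \<bullet> z"
      using Rk z[OF y] by (simp add: inner_add_left orthogonal_def inner_commute[of y z])
    have "z \<noteq> 0"
    proof
      assume "z = 0"
      have "R ` ({..<l} - {k}) \<subseteq> (\<lambda>i. if i = k then 0 else R i) ` {..<l}"
        by (rule subsetI) (auto simp: image_iff)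
      then have "y \<in> span ((\<lambda>i. if i = k then 0 else R i) ` {..<l})"
        using y span_mono by blast
      then obtain c where c: "y = (\<Sum>i<l. c i *\<^sub>R (if i = k then 0 else R i))"
        using span_image_lessThan_lincomb by blast
      have "(\<Sum>i<l. (if i = k then -1 else c i) *\<^sub>R R i) =
            (\<Sum>i<l. c i *\<^sub>R (if i = k then 0 else R i) + (if i = k then - R k else 0))"
        by (rule sum.cong) auto
      also have "\<dots> = 0" using k c Rk \<open>z = 0\<close> by (simp add: sum.distrib)
      finally have "(\<Sum>i<l. (if i = k then -1 else c i) *\<^sub>R R i) = 0" .
      from li[unfolded lin_indep_family_def, rule_format, OF this k] show False by simp
    qed
    have "y \<in> span (R ` {..<l})"
      using y span_mono[of "R ` ({..<l} - {k})" "R ` {..<l}"] by blast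
    moreover have "R k \<in> span (R ` {..<l})" using k by (auto intro: span_base)
    ultimately have "z \<in> span (R ` {..<l})" using Rk span_diff by fastforce
    then have "(1 / (z \<bullet> z)) *\<^sub>R z \<in> span (R ` {..<l})" by (rule span_mul)
    moreover have "\<forall>i<l. R i \<bullet> ((1 / (z \<bullet> z)) *\<^sub>R z) = (if i = k then 1 else 0)"
      using zR zRk \<open>z \<noteq> 0\<close> by auto
    ultimately show ?thesis by blast
  qed simp
  then show ?thesis by metis
qed

definition orth_projection :: "('a::real_inner \<Rightarrow> 'a) \<Rightarrow> bool" where
  "orth_projection P \<longleftrightarrow> linear P \<and> (\<forall>x. P (P x) = P x) \<and> (\<forall>x y. P x \<bullet> y = x \<bullet> P y)"

context
  fixes P :: "'a::euclidean_space \<Rightarrow> 'a"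
  assumes P: "orth_projection P"
begin

lemma orth_projection_linear: "linear P"
  and orth_projection_idem: "P (P x) = P x"
  and orth_projection_adjoint: "P x \<bullet> y = x \<bullet> P y"
  using P unfolding orth_projection_def by blast+

lemma orth_projection_dual_family:
  fixes a :: "nat \<Rightarrow> 'a"
  assumes "lin_indep_family l (\<lambda>i. P (a i))"
  shows "\<exists>D. \<forall>k<l. P (D k) = D k \<and> (\<forall>i<l. a i \<bullet> D k = (if i = k then 1 else 0))"
proof -
  obtain D where D: "\<forall>k<l. D k \<in> span ((\<lambda>i. P (a i)) ` {..<l}) \<and>
      (\<forall>i<l. P (a i) \<bullet> D k = (if i = k then 1 else 0))"
    using dual_family_exists[OF assms] by blast
  have "subspace {x. P x = x}"
    using orth_projection_linear by (auto simp: subspace_def linear_add linear_scale linear_0)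
  then have "span ((\<lambda>i. P (a i)) ` {..<l}) \<subseteq> {x. P x = x}"
    by (rule span_minimal[rotated]) (auto simp: orth_projection_idem)
  then have PD: "P (D k) = D k" if "k < l" for k using D that by blast
  moreover have "a i \<bullet> D k = P (a i) \<bullet> D k" if "k < l" for i k
    using PD[OF that] by (metis orth_projection_adjoint)
  ultimately show ?thesis using D by (intro exI[of _ D]) auto
qed

lemma orth_projection_multipliers:
  fixes a :: "nat \<Rightarrow> 'a"
  assumes "\<And>x. P x = x \<Longrightarrow> (\<forall>i<l. a i \<bullet> x = 0) \<Longrightarrow> g \<bullet> x = 0"
  shows "\<exists>c. P (g - (\<Sum>i<l. c i *\<^sub>R a i)) = 0"
proof -
  have "\<exists>c. P g = (\<Sum>i<l. c i *\<^sub>R P (a i))"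
  proof (rule orthogonal_to_common_kernel_imp_lincomb)
    fix x assume "\<forall>i<l. P (a i) \<bullet> x = 0"
    then have "\<forall>i<l. a i \<bullet> P x = 0" by (simp add: orth_projection_adjoint)
    then show "P g \<bullet> x = 0"
      using assms[of "P x"] by (simp add: orth_projection_idem orth_projection_adjoint)
  qed
  then show ?thesis
    using orth_projection_linear by (auto simp: linear_diff linear_sum linear_scale)
qed

text \<open>A dual family inside the range of P lets one correct any w in W \<supseteq> range P to a vector
  of W in the common kernel, so the conclusion extends from range P to W.\<close>

lemma orth_projection_orthogonal_extension:
  assumes li: "lin_indep_family l (\<lambda>i. P (a i))"
    and W: "subspace W" "\<And>x. P x \<in> W"
    and g: "\<And>w. w \<in> W \<Longrightarrow> (\<forall>i<l. a i \<bullet> w = 0) \<Longrightarrow> g \<bullet> w = 0"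
    and h: "h = g - (\<Sum>i<l. c i *\<^sub>R a i)" "P h = 0"
    and w: "w \<in> W"
  shows "h \<bullet> w = 0"
proof -
  obtain D where D: "\<forall>k<l. P (D k) = D k \<and> (\<forall>i<l. a i \<bullet> D k = (if i = k then 1 else 0))"
    using orth_projection_dual_family[OF li] by blast
  define z where "z = (\<Sum>k<l. (a k \<bullet> w) *\<^sub>R D k)"
  have Pz: "P z = z"
    unfolding z_def using D orth_projection_linear by (simp add: linear_sum linear_scale)
  have az: "a i \<bullet> z = a i \<bullet> w" if "i < l" for i
    unfolding z_def using D that by (intro inner_sum_dual_family) auto
  have "w - z \<in> W" using W w Pz by (metis subspace_diff)
  moreover have "\<forall>i<l. a i \<bullet> (w - z) = 0" using az by (simp add: inner_diff_right)
  ultimately have "h \<bullet> (w - z) = 0"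
    using g by (simp add: h(1) inner_diff_left inner_sum_left)
  moreover have "h \<bullet> z = 0" using Pz h(2) by (metis orth_projection_adjoint inner_zero_left)
  ultimately show ?thesis by (simp add: inner_diff_right)
qed

end

lemma orth_projection_tangent_proj: "orth_projection (tangent_proj S)"
  unfolding orth_projection_def tangent_proj_def inner_matrix_eq_sum
  by (auto intro!: linearI sum.cong simp: vec_eq_iff)

lemma orth_projection_mult_diag_mask: "orth_projection (\<lambda>M::real^'n^'m. M ** diag_mask P)"
  unfolding orth_projection_def
  by (auto intro!: linearI simp: matrix_add_rdistrib matrix_scaleR_left inner_matrix_mult_right
      simp flip: matrix_mul_assoc)

lemma norm_sum_inner_scaleR_le:
  fixes a D :: "nat \<Rightarrow> 'a::real_inner"
  shows "norm (\<Sum>k<l. (a k \<bullet> Q) *\<^sub>R D k) \<le> (\<Sum>k<l. norm (a k) * norm (D k)) * norm Q"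
proof -
  have "norm (\<Sum>k<l. (a k \<bullet> Q) *\<^sub>R D k) \<le> (\<Sum>k<l. \<bar>a k \<bullet> Q\<bar> * norm (D k))"
    by (rule order_trans[OF norm_sum]) simp
  also have "\<dots> \<le> (\<Sum>k<l. norm (a k) * norm (D k) * norm Q)"
    by (intro sum_mono) (metis Cauchy_Schwarz_ineq2 mult.commute mult.left_commute
        mult_right_mono norm_ge_zero)
  finally show ?thesis by (simp add: sum_distrib_right)
qed

lemma brouwer_correction:
  fixes Q :: "'a::euclidean_space \<Rightarrow> 'a" and a D :: "nat \<Rightarrow> 'a"
  assumes "continuous_on UNIV Q" "\<rho> > 0"
    and bound: "\<And>W. norm W \<le> \<rho> \<Longrightarrow> (\<Sum>k<l. norm (a k) * norm (D k)) * norm (Q (G + W)) \<le> \<rho>"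
  shows "\<exists>W. norm W \<le> \<rho> \<and> W = - (\<Sum>k<l. (a k \<bullet> Q (G + W)) *\<^sub>R D k)"
proof -
  define F where "F W = - (\<Sum>k<l. (a k \<bullet> Q (G + W)) *\<^sub>R D k)" for W
  have "continuous_on (cball 0 \<rho>) F"
    unfolding F_def
    by (intro continuous_intros continuous_on_compose2[OF assms(1)]) auto
  moreover have "F \<in> cball 0 \<rho> \<rightarrow> cball 0 \<rho>"
  proof
    fix W :: 'a assume "W \<in> cball 0 \<rho>"
    then have "(\<Sum>k<l. norm (a k) * norm (D k)) * norm (Q (G + W)) \<le> \<rho>" by (simp add: bound)
    then show "F W \<in> cball 0 \<rho>"
      unfolding F_def
      using norm_sum_inner_scaleR_le[where Q = "Q (G + W)" and a = a and D = D and l = l] by simp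
  qed
  ultimately obtain W where "W \<in> cball 0 \<rho>" "F W = W"
    using brouwer_ball[OF \<open>\<rho> > 0\<close>] by blast
  then show ?thesis unfolding F_def by auto
qed

lemma norm_quadratic_at_perturbation_le:
  fixes Q :: "'a::real_normed_vector \<Rightarrow> 'b::real_normed_vector"
  assumes Qb: "\<And>G. norm (Q G) \<le> K * norm G ^ 2"
    and "t \<ge> 0" "norm H \<le> h" "norm W \<le> h * t"
  shows "norm (Q (t *\<^sub>R H + W)) \<le> \<bar>K\<bar> * (2 * h * t) ^ 2"
proof -
  have "norm (t *\<^sub>R H + W) \<le> t * norm H + norm W"
    using norm_triangle_ineq[of "t *\<^sub>R H" W] assms(2) by simp
  moreover have "t * norm H \<le> h * t" using mult_left_mono[OF assms(3,2)] by (simp add: mult.commute)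
  ultimately have "norm (t *\<^sub>R H + W) \<le> 2 * h * t" using assms(4) by linarith
  then have "norm (t *\<^sub>R H + W) ^ 2 \<le> (2 * h * t) ^ 2" by (intro power_mono) auto
  then show ?thesis
    using Qb[of "t *\<^sub>R H + W"] abs_ge_self[of K]
    by (meson mult_mono abs_ge_zero order_trans zero_le_power2)
qed

text \<open>When D is dual to the a i, the fixed point W makes W + Q(t H + W) orthogonal to every a i;
  it is found by Brouwer's theorem on a ball of radius O(t^2).\<close>

lemma quadratic_correction:
  fixes Q :: "'a::euclidean_space \<Rightarrow> 'a" and a D :: "nat \<Rightarrow> 'a"
  assumes Qc: "continuous_on UNIV Q" and Qb: "\<And>G. norm (Q G) \<le> K * norm G ^ 2"
  shows "\<exists>\<delta>>0. \<exists>C. \<forall>t. 0 < t \<and> t < \<delta> \<longrightarrow> (\<exists>W. W = - (\<Sum>k<l. (a k \<bullet> Q (t *\<^sub>R H + W)) *\<^sub>R D k) \<and>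
            norm W \<le> C * t\<^sup>2 \<and> norm (Q (t *\<^sub>R H + W)) \<le> C * t\<^sup>2)"
proof -
  define KA where "KA = (\<Sum>k<l. norm (a k) * norm (D k))"
  define K' where "K' = (KA + 1) * (\<bar>K\<bar> + 1)"
  define h where "h = norm H + 1"
  have KA: "KA \<ge> 0" unfolding KA_def by (intro sum_nonneg) auto
  have K': "K' > 0" "(KA + 1) * \<bar>K\<bar> \<le> K'"
    unfolding K'_def using KA by (auto intro!: mult_pos_pos mult_left_mono)
  have h: "h > 0" "norm H \<le> h" unfolding h_def by (auto intro: add_nonneg_pos)
  have main: "\<exists>W. W = - (\<Sum>k<l. (a k \<bullet> Q (t *\<^sub>R H + W)) *\<^sub>R D k) \<and>
      norm W \<le> 4 * K' * h\<^sup>2 * t\<^sup>2 \<and> norm (Q (t *\<^sub>R H + W)) \<le> 4 * K' * h\<^sup>2 * t\<^sup>2"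
    if t: "0 < t" "t < 1 / (4 * K' * h)" for t
  proof -
    define \<rho> where "\<rho> = 4 * K' * h\<^sup>2 * t\<^sup>2"
    have "\<rho> > 0" unfolding \<rho>_def using K' h t by simp
    have "4 * K' * h * t \<le> 1" using t K' h by (simp add: field_simps)
    then have "\<rho> \<le> h * t"
      using mult_right_mono[of "4 * K' * h * t" 1 "h * t"] h t
      unfolding \<rho>_def by (simp add: power2_eq_square mult_ac)
    have Qbound: "KA * norm (Q (t *\<^sub>R H + W)) \<le> \<rho> \<and> norm (Q (t *\<^sub>R H + W)) \<le> \<rho>"
      if "norm W \<le> \<rho>" for W
    proof -
      have "norm (Q (t *\<^sub>R H + W)) \<le> \<bar>K\<bar> * (2 * h * t) ^ 2"
        using norm_quadratic_at_perturbation_le[OF Qb] t h(2) that \<open>\<rho> \<le> h * t\<close> by simp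
      then have "(KA + 1) * norm (Q (t *\<^sub>R H + W)) \<le> (KA + 1) * \<bar>K\<bar> * (2 * h * t) ^ 2"
        using KA by (simp add: mult.assoc mult_left_mono)
      also have "\<dots> \<le> K' * (2 * h * t) ^ 2" using K' by (intro mult_right_mono) auto
      finally have "KA * norm (Q (t *\<^sub>R H + W)) + norm (Q (t *\<^sub>R H + W)) \<le> \<rho>"
        unfolding \<rho>_def by (simp add: power2_eq_square algebra_simps)
      moreover have "KA * norm (Q (t *\<^sub>R H + W)) \<ge> 0" using KA by simp
      ultimately show ?thesis using norm_ge_zero[of "Q (t *\<^sub>R H + W)"] by linarith
    qed
    obtain W where "norm W \<le> \<rho>" "W = - (\<Sum>k<l. (a k \<bullet> Q (t *\<^sub>R H + W)) *\<^sub>R D k)"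
      using brouwer_correction[OF Qc \<open>\<rho> > 0\<close>, where l = l and a = a and D = D and G = "t *\<^sub>R H"]
        Qbound unfolding KA_def by blast
    then show ?thesis using Qbound unfolding \<rho>_def by blast
  qed
  show ?thesis
    using K' h main by (intro exI[of _ "1 / (4 * K' * h)"] exI[of _ "4 * K' * h\<^sup>2"]) auto
qed

text \<open>The curve is (S + G) S' (S + G J) with S' the pseudo-inverse of S and G = t H + W for the
  correction W above; by curve_identity it equals S + t H + W + Q(G), Q the quadratic remainder.\<close>

lemma monomial_rank_curve:
  fixes S H :: "real^'n^'m" and a D :: "nat \<Rightarrow> real^'n^'m"
  assumes mono: "monomial S" and PH: "tangent_proj S H = H"
    and PD: "\<forall>k<l. tangent_proj S (D k) = D k"
    and dual: "\<forall>i<l. \<forall>k<l. a i \<bullet> D k = (if i = k then 1 else 0)"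
    and aH: "\<forall>i<l. a i \<bullet> H = 0"
  shows "\<exists>\<delta>>0. \<exists>C. \<forall>t. 0 < t \<and> t < \<delta> \<longrightarrow> (\<exists>W. rank (S + t *\<^sub>R H + W) \<le> rank (monomial_pinv S) \<and>
            (\<forall>i<l. a i \<bullet> (t *\<^sub>R H + W) = 0) \<and> norm W \<le> C * t\<^sup>2)"
proof -
  obtain K where "\<And>G. norm (curve_remainder S G) \<le> K * norm G ^ 2"
    using curve_remainder_quadratic by blast
  from quadratic_correction[OF continuous_curve_remainder this,
      where l = l and a = a and D = D and H = H]
  obtain \<delta> C where "\<delta> > 0" and corr: "\<And>t. 0 < t \<Longrightarrow> t < \<delta> \<Longrightarrow> \<exists>W.
      W = - (\<Sum>k<l. (a k \<bullet> curve_remainder S (t *\<^sub>R H + W)) *\<^sub>R D k) \<and>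
      norm W \<le> C * t\<^sup>2 \<and> norm (curve_remainder S (t *\<^sub>R H + W)) \<le> C * t\<^sup>2"
    by blast
  have P: "linear (tangent_proj S)"
    by (rule orth_projection_linear[OF orth_projection_tangent_proj])
  have "\<exists>W'. rank (S + t *\<^sub>R H + W') \<le> rank (monomial_pinv S) \<and>
            (\<forall>i<l. a i \<bullet> (t *\<^sub>R H + W') = 0) \<and> norm W' \<le> (2 * C) * t\<^sup>2"
    if t: "0 < t" "t < \<delta>" for t
  proof -
    obtain W where W: "W = - (\<Sum>k<l. (a k \<bullet> curve_remainder S (t *\<^sub>R H + W)) *\<^sub>R D k)"
      "norm W \<le> C * t\<^sup>2" "norm (curve_remainder S (t *\<^sub>R H + W)) \<le> C * t\<^sup>2"
      using corr[OF t] by blast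
    define G where "G = t *\<^sub>R H + W"
    define W' where "W' = W + curve_remainder S G"
    have "tangent_proj S W = W"
      by (subst (1 2) W(1)) (simp add: linear_neg[OF P] linear_sum[OF P] linear_scale[OF P] PD)
    then have "tangent_proj S G = G" by (simp add: G_def linear_add[OF P] linear_scale[OF P] PH)
    then have "S + t *\<^sub>R H + W' = S + tangent_proj S G + curve_remainder S G"
      by (simp add: W'_def G_def add.assoc)
    then have "rank (S + t *\<^sub>R H + W') \<le> rank (monomial_pinv S)"
      using rank_curve_le[OF mono, of G] by (simp only:)
    moreover have "a i \<bullet> (t *\<^sub>R H + W') = 0" if "i < l" for i
    proof -
      have "a i \<bullet> W = - (a i \<bullet> curve_remainder S G)"
        by (subst W(1)) (simp add: G_def inner_sum_dual_family[OF dual that])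
      then show ?thesis using aH that by (simp add: W'_def inner_add_right)
    qed
    moreover have "norm W' \<le> (2 * C) * t\<^sup>2"
      using norm_triangle_ineq[of W "curve_remainder S G"] W(2,3) by (simp add: W'_def G_def)
    ultimately show ?thesis by blast
  qed
  then show ?thesis using \<open>\<delta> > 0\<close> by blast
qed

lemma left_invertible_if_small_perturbation:
  fixes E :: "real^'n^'n"
  assumes "\<And>x. norm (E *v x) \<le> norm x / 2"
  shows "\<exists>L. L ** (mat 1 + E) = mat 1"
proof -
  have "x = 0" if "(mat 1 + E) *v x = 0" for x
  proof -
    have "x = - (E *v x)"
      using that by (simp add: matrix_vector_mult_add_rdistrib eq_neg_iff_add_eq_0)
    then have "norm x \<le> norm x / 2" using assms[of x] by (metis norm_minus_cancel)
    then show ?thesis by simp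
  qed
  then have "inj ((*v) (mat 1 + E))"
    by (simp add: linear_injective_0[OF matrix_vector_mul_linear])
  then show ?thesis using matrix_left_invertible_injective by blast
qed

lemma range_eq_support_columns_if_rank_le:
  fixes S Z :: "real^'n^'m"
  assumes mono: "monomial S" and rk: "rank Z \<le> rank S"
    and small: "\<And>x. norm ((monomial_pinv S ** (Z - S)) *v x) \<le> norm x / 2"
  shows "range ((*v) (Z ** diag_mask (nonzero_col S))) = range ((*v) Z)"
proof (rule subspace_dim_equal)
  define E where "E = monomial_pinv S ** (Z - S)"
  define Dn where "Dn = diag_mask (nonzero_col S)"
  obtain L where L: "L ** (mat 1 + E) = mat 1"
    using left_invertible_if_small_perturbation small unfolding E_def by blast
  have "monomial_pinv S ** Z = Dn + E"
    using pinv_mult_monomial[OF mono] by (simp add: E_def Dn_def matrix_diff_ldistrib)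
  then have pZD: "monomial_pinv S ** (Z ** Dn) = (mat 1 + E) ** Dn"
    by (simp add: matrix_mul_assoc matrix_add_rdistrib Dn_def)
  have "S ** Dn = S" by (auto simp: Dn_def matrix_mult_diag_mask vec_eq_iff nonzero_col_def)
  then have "rank S \<le> rank Dn" using rank_mul_le_right[of S Dn] by simp
  show "subspace (range ((*v) (Z ** diag_mask (nonzero_col S))))" "subspace (range ((*v) Z))"
    by (rule linear_subspace_image[OF matrix_vector_mul_linear subspace_UNIV])+
  show "range ((*v) (Z ** diag_mask (nonzero_col S))) \<subseteq> range ((*v) Z)"
    by (auto simp flip: matrix_vector_mul_assoc)
  have "L ** (monomial_pinv S ** (Z ** Dn)) = Dn"
    unfolding pZD by (simp add: matrix_mul_assoc L)
  then have "rank Dn = rank (L ** (monomial_pinv S ** (Z ** Dn)))" by simp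
  also have "\<dots> \<le> rank (Z ** Dn)" by (metis rank_mul_le_right order_trans)
  finally show "dim (range ((*v) Z)) \<le> dim (range ((*v) (Z ** diag_mask (nonzero_col S))))"
    using rk \<open>rank S \<le> rank Dn\<close> by (simp add: rank_dim_range Dn_def)
qed

lemma rank_le_monomial_block_entry:
  fixes S Z :: "real^'n^'m"
  assumes mono: "monomial S" and rk: "rank Z \<le> rank S"
    and small: "\<And>x. norm ((monomial_pinv S ** (Z - S)) *v x) \<le> norm x / 2"
    and p: "\<not> nonzero_row S p" and q: "\<not> nonzero_col S q"
  shows "\<exists>u. norm u \<le> 2 * norm ((monomial_pinv S ** (Z - S)) *v axis q 1) \<and>
             Z$p$q = ((Z - S) *v u) $ p"
proof -
  define E where "E = monomial_pinv S ** (Z - S)"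
  define Dn where "Dn = diag_mask (nonzero_col S)"
  define v :: "real^'n" where "v = axis q 1"
  have pZ: "monomial_pinv S ** Z = Dn + E"
    using pinv_mult_monomial[OF mono] by (simp add: E_def Dn_def matrix_diff_ldistrib)
  have "Z *v v \<in> range ((*v) (Z ** Dn))"
    using range_eq_support_columns_if_rank_le[OF mono rk small] by (simp add: Dn_def)
  then obtain w where w: "Z *v v = (Z ** Dn) *v w" by blast
  define u where "u = Dn *v w"
  have Zu: "Z *v v = Z *v u" unfolding u_def w by (simp add: matrix_vector_mul_assoc)
  have Du: "Dn *v u = u" unfolding u_def by (simp add: matrix_vector_mul_assoc Dn_def)
  have Dv: "Dn *v v = 0"
    using q by (simp add: Dn_def v_def matrix_vector_mult_basis column_def diag_mask_def vec_eq_iff)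
  have "u + E *v u = E *v v"
  proof -
    have "monomial_pinv S *v (Z *v u) = u + E *v u"
      by (simp add: matrix_vector_mul_assoc pZ matrix_vector_mult_add_rdistrib Du)
    moreover have "monomial_pinv S *v (Z *v v) = E *v v"
      by (simp add: matrix_vector_mul_assoc pZ matrix_vector_mult_add_rdistrib Dv)
    ultimately show ?thesis using Zu by simp
  qed
  then have "u = E *v v - E *v u" by (simp add: algebra_simps)
  then have "norm u \<le> norm (E *v v) + norm (E *v u)" by (metis norm_triangle_ineq4)
  then have "norm u \<le> norm (E *v v) + norm u / 2" using small[of u] unfolding E_def by linarith
  have "(S *v u) $ p = 0"
    using p unfolding nonzero_row_def by (simp add: matrix_vector_mult_def)
  have "Z$p$q = (Z *v v) $ p" by (simp add: v_def matrix_vector_mult_basis column_def)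
  also have "\<dots> = ((Z - S) *v u) $ p"
    using Zu \<open>(S *v u) $ p = 0\<close> by (simp add: matrix_vector_mult_diff_rdistrib)
  finally show ?thesis
    using \<open>norm u \<le> norm (E *v v) + norm u / 2\<close> unfolding E_def v_def by (intro exI[of _ u]) auto
qed

lemma rank_le_monomial_block_entry_seq:
  fixes S :: "real^'n^'m" and Z :: "nat \<Rightarrow> real^'n^'m"
  assumes mono: "monomial S" and rk: "\<forall>k. rank (Z k) \<le> rank S" and Z: "Z \<longlonglongrightarrow> S"
    and p: "\<not> nonzero_row S p" and q: "\<not> nonzero_col S q"
  shows "\<exists>u. u \<longlonglongrightarrow> 0 \<and> (\<forall>\<^sub>F k in sequentially. Z k $ p $ q = ((Z k - S) *v u k) $ p)"
proof -
  define E where "E = (\<lambda>k. monomial_pinv S ** (Z k - S))"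
  obtain B where B: "\<forall>(M::real^'n^'n) x. norm (M *v x) \<le> B * norm M * norm x"
    using matrix_vector_mult_norm_bound by blast
  have bl: "bounded_linear ((**) (monomial_pinv S))"
    using bounded_bilinear_matrix_mult by (rule bounded_bilinear.bounded_linear_right)
  have E0: "E \<longlonglongrightarrow> 0"
    using bounded_linear.tendsto[OF bl, OF tendsto_diff[OF Z tendsto_const[of S]]]
    by (simp add: E_def)
  then have "(\<lambda>k. B * norm (E k)) \<longlonglongrightarrow> 0" by (intro tendsto_mult_right_zero tendsto_norm_zero)
  then have "\<forall>\<^sub>F k in sequentially. B * norm (E k) < 1 / 2" by (rule order_tendstoD(2)) simp
  then have ev: "\<forall>\<^sub>F k in sequentially. \<exists>u. norm u \<le> 2 * norm (E k *v axis q 1) \<and>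
      Z k $ p $ q = ((Z k - S) *v u) $ p"
  proof eventually_elim
    case (elim k)
    have "norm (E k *v x) \<le> norm x / 2" for x
      using B[rule_format, of "E k" x] elim mult_right_mono[of "B * norm (E k)" "1/2" "norm x"]
      by simp
    then show ?case using rank_le_monomial_block_entry[OF mono _ _ p q] rk unfolding E_def by blast
  qed
  define u where "u k = (SOME u. norm u \<le> 2 * norm (E k *v axis q 1) \<and>
      Z k $ p $ q = ((Z k - S) *v u) $ p)" for k
  have u: "\<forall>\<^sub>F k in sequentially. norm (u k) \<le> 2 * norm (E k *v axis q 1) \<and>
      Z k $ p $ q = ((Z k - S) *v u k) $ p"
    using ev unfolding u_def by (rule eventually_mono) (rule someI_ex)
  have "(\<lambda>k. E k *v axis q 1) \<longlonglongrightarrow> 0"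
    using bounded_bilinear.tendsto[OF bounded_bilinear_matrix_vector_mult E0 tendsto_const] by simp
  then have "(\<lambda>k. 2 * norm (E k *v axis q 1)) \<longlonglongrightarrow> 0"
    by (intro tendsto_mult_right_zero tendsto_norm_zero)
  moreover have "\<forall>\<^sub>F k in sequentially. norm (u k) \<le> 2 * norm (E k *v axis q 1)"
    using u by (rule eventually_mono) (rule conjunct1)
  ultimately have "u \<longlonglongrightarrow> 0" by (rule Lim_null_comparison[rotated])
  moreover have "\<forall>\<^sub>F k in sequentially. Z k $ p $ q = ((Z k - S) *v u k) $ p"
    using u by (rule eventually_mono) (rule conjunct2)
  ultimately show ?thesis by blast
qed

text \<open>On the block of zero rows and columns of S the entries of Z k are those of (Z k - S) u k
  with u k tending to zero (rank_le_monomial_block_entry_seq), hence are o(t k).\<close>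

lemma bouligand_tangent_monomial_block_zero:
  fixes S :: "real^'n^'m"
  assumes mono: "monomial S" and \<Xi>: "\<Xi> \<in> bouligand_tangent {Z. rank Z \<le> rank S} S"
    and p: "\<not> nonzero_row S p" and q: "\<not> nonzero_col S q"
  shows "\<Xi>$p$q = 0"
proof -
  obtain Z t where Z: "\<forall>k. rank (Z k) \<le> rank S" "Z \<longlonglongrightarrow> S"
    and lim: "(\<lambda>k. (Z k - S) /\<^sub>R t k) \<longlonglongrightarrow> \<Xi>"
    using \<Xi> unfolding bouligand_tangent_def by blast
  obtain u where u0: "u \<longlonglongrightarrow> 0" and u: "\<forall>\<^sub>F k in sequentially. Z k $ p $ q = ((Z k - S) *v u k) $ p"
    using rank_le_monomial_block_entry_seq[OF mono Z p q] by blast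
  have "S $ p $ q = 0" using p unfolding nonzero_row_def by blast
  then have "((Z k - S) /\<^sub>R t k *v u k) $ p = ((Z k - S) /\<^sub>R t k) $ p $ q"
    if "Z k $ p $ q = ((Z k - S) *v u k) $ p" for k
    using that by (simp add: scaleR_matrix_vector_assoc[symmetric] divide_inverse mult.commute)
  then have "\<forall>\<^sub>F k in sequentially.
      ((Z k - S) /\<^sub>R t k *v u k) $ p = ((Z k - S) /\<^sub>R t k) $ p $ q"
    using u by (auto elim: eventually_mono)
  moreover have "(\<lambda>k. ((Z k - S) /\<^sub>R t k *v u k) $ p) \<longlonglongrightarrow> (\<Xi> *v 0) $ p"
    by (intro tendsto_vec_nth bounded_bilinear.tendsto[OF bounded_bilinear_matrix_vector_mult]
        lim u0)
  ultimately have "(\<lambda>k. ((Z k - S) /\<^sub>R t k) $ p $ q) \<longlonglongrightarrow> 0"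
    by (simp add: Lim_transform_eventually)
  moreover have "(\<lambda>k. ((Z k - S) /\<^sub>R t k) $ p $ q) \<longlonglongrightarrow> \<Xi> $ p $ q"
    by (intro tendsto_vec_nth lim)
  ultimately show ?thesis by (rule LIMSEQ_unique[symmetric])
qed

lemma inner_eq_zero_if_tangent_proj_zero:
  fixes N M :: "real^'n^'m"
  assumes "tangent_proj S N = 0"
    and "\<And>p q. \<not> nonzero_row S p \<Longrightarrow> \<not> nonzero_col S q \<Longrightarrow> M$p$q = 0"
  shows "N \<bullet> M = 0"
proof -
  have "N$p$q * M$p$q = 0" for p q
    using assms(2)[of p q] arg_cong[where f = "\<lambda>G. G $ p $ q", OF assms(1)]
    by (auto simp: tangent_proj_def split: if_splits)
  then show ?thesis unfolding inner_matrix_eq_sum by (simp add: sum.neutral)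
qed

locale rank_moa_point =
  fixes f :: "real^'n^'m \<Rightarrow> real"
    and A :: "nat \<Rightarrow> real^'n^'m" and b :: "nat \<Rightarrow> real" and l r s :: nat
    and X :: "real^'n^'m" and U :: "real^'m^'m" and S :: "real^'n^'m" and V :: "real^'n^'n"
    and em :: "nat \<Rightarrow> 'm" and en :: "nat \<Rightarrow> 'n"
  assumes dims: "r < CARD('n)" "CARD('n) \<le> CARD('m)"
    and f_C1: "cont_diff f"
    and em: "bij_betw em {..<CARD('m)} UNIV" and en: "bij_betw en {..<CARD('n)} UNIV"
    and X_feas: "X \<in> feas_L l A b \<inter> rank_le r"
    and s_def: "s = rank X"
    and svd: "is_svd em en X U S V s"
begin

abbreviation coords :: "real^'n^'m \<Rightarrow> real^'n^'m" where
  "coords \<equiv> orth_rot (transpose U) (transpose V)"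

lemma s_le_r: "s \<le> r"
  using X_feas s_def unfolding rank_le_def by auto

lemma orthogonal_U: "orthogonal_matrix U" and orthogonal_V: "orthogonal_matrix V"
  using svd unfolding is_svd_def by blast+

lemma X_eq: "X = orth_rot U V S"
  using svd unfolding is_svd_def orth_rot_def by blast

lemma s_le_rank_S: "s \<le> rank S"
  using s_def rank_orth_rot_le[of U V S] by (simp add: X_eq)

lemma coords_X: "coords X = S"
  unfolding X_eq by (rule orth_rot_transpose_cancel[OF orthogonal_U orthogonal_V])

lemma orth_rot_coords: "orth_rot U V (coords Y) = Y"
  by (rule orth_rot_cancel_transpose[OF orthogonal_U orthogonal_V])

lemma S_nonzero_iff: "S$p$q \<noteq> 0 \<longleftrightarrow> (\<exists>i<s. p = em i \<and> q = en i)"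
proof
  assume nz: "S$p$q \<noteq> 0"
  obtain i j where ij: "i < CARD('m)" "p = em i" "j < CARD('n)" "q = en j"
    using em en unfolding bij_betw_def by (metis UNIV_I imageE lessThan_iff)
  then have "i = j" using svd nz unfolding is_svd_def by blast
  moreover have "j < s" using svd ij nz \<open>i = j\<close> unfolding is_svd_def by (meson not_le)
  ultimately show "\<exists>i<s. p = em i \<and> q = en i" using ij by blast
next
  assume "\<exists>i<s. p = em i \<and> q = en i"
  then show "S$p$q \<noteq> 0" using svd unfolding is_svd_def by fastforce
qed

lemma monomial_S: "monomial S"
proof -
  have "s \<le> CARD('n)" using s_le_r dims by linarith
  then have "inj_on em {..<s}" "inj_on en {..<s}"
    using em en dims(2) unfolding bij_betw_def by (auto intro: inj_on_subset)
  then show ?thesis unfolding monomial_def S_nonzero_iff by (auto dest: inj_onD)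
qed

lemma nonzero_row_S: "nonzero_row S p \<longleftrightarrow> p \<in> em ` {..<s}"
  and nonzero_col_S: "nonzero_col S q \<longleftrightarrow> q \<in> en ` {..<s}"
  unfolding nonzero_row_def nonzero_col_def S_nonzero_iff by auto

lemma card_nonzero_row_S: "card {p. nonzero_row S p} \<le> s"
  and card_nonzero_col_S: "card {q. nonzero_col S q} \<le> s"
  unfolding nonzero_row_S nonzero_col_S
  by (metis card_image_le card_lessThan finite_lessThan Collect_mem_eq)+

lemma T_mat_eq: "T_mat em en s U V Ai = tangent_proj S (coords Ai)"
  unfolding T_mat_def tangent_proj_def orth_rot_def nonzero_row_S nonzero_col_S
  by (auto simp: vec_eq_iff)

lemma R_mat_eq: "R_mat em en s U V Ai = coords Ai ** diag_mask (nonzero_col S)"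
  unfolding R_mat_def orth_rot_def matrix_mult_diag_mask nonzero_col_S by (auto simp: vec_eq_iff)

lemma grad_at_X: "(f has_derivative (\<lambda>H. grad f X \<bullet> H)) (at X)"
  using f_C1 unfolding cont_diff_def by (blast intro: grad_has_derivative)

lemma inner_A_orth_rot: "A i \<bullet> orth_rot U V Z = coords (A i) \<bullet> Z"
  by (metis inner_commute inner_orth_rot)

lemma orth_rot_feasible:
  assumes "rank Z \<le> r" "\<forall>i<l. coords (A i) \<bullet> Z = b i"
  shows "orth_rot U V Z \<in> feas_L l A b \<inter> rank_le r"
  using assms rank_orth_rot_le[of U V Z] inner_A_orth_rot
  unfolding feas_L_def rank_le_def by (auto intro: order_trans)

lemma coords_A_S: "i < l \<Longrightarrow> coords (A i) \<bullet> S = b i"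
  using X_feas inner_A_orth_rot[of i S] unfolding X_eq feas_L_def by auto

lemma F_stationary_if_lagr_grad_zero:
  assumes "lagr_grad f l A y X = 0"
  shows "F_stationary f l A b r X"
  using assms X_feas unfolding F_stationary_def frechet_normal_def by (auto intro!: exI[of _ y])

lemma orth_rot_in_tangent:
  assumes "\<And>t. rank (S + t *\<^sub>R G) \<le> r"
  shows "orth_rot U V G \<in> bouligand_tangent (rank_le r) X"
proof (rule segment_in_bouligand_tangent)
  fix t :: real
  have "X + t *\<^sub>R orth_rot U V G = orth_rot U V (S + t *\<^sub>R G)"
    unfolding X_eq using linear_orth_rot[of U V] by (simp add: linear_add linear_scale)
  then show "X + t *\<^sub>R orth_rot U V G \<in> rank_le r"
    unfolding rank_le_def using rank_orth_rot_le[of U V] assms order_trans by fastforce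
qed

lemma rank_S_plus_column_le:
  assumes "s < r" "\<And>i j. \<not> (nonzero_col S j \<or> j = q) \<Longrightarrow> G$i$j = 0"
  shows "rank (S + t *\<^sub>R G) \<le> r"
proof -
  have "rank (S + t *\<^sub>R G) \<le> card {j. nonzero_col S j \<or> j = q}"
    by (rule rank_le_card_nonzero_columns) (use assms(2) in \<open>auto simp: nonzero_col_def\<close>)
  also have "\<dots> \<le> r"
    using card_Collect_or_eq_le[of "nonzero_col S" q] card_nonzero_col_S assms(1) by linarith
  finally show ?thesis .
qed

lemma convex_min_on_M_Gamma:
  assumes cv: "convex_on UNIV f" and stat: "F_stationary f l A b r X"
    and Y: "Y \<in> feas_L l A b \<inter> M_Gamma en s U V"
  shows "f X \<le> f Y"
proof -
  obtain y where normal: "- lagr_grad f l A y X \<in> frechet_normal (rank_le r) X"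
    using stat unfolding F_stationary_def by blast
  obtain B where B: "Y = orth_rot U V B" "\<forall>p q. q \<notin> en ` {..<s} \<longrightarrow> B $ p $ q = 0"
    using Y unfolding M_Gamma_def orth_rot_def by blast
  have "rank (S + t *\<^sub>R (B - S)) \<le> r" for t
  proof -
    have "rank (S + t *\<^sub>R (B - S)) \<le> card {j. nonzero_col S j}"
    proof (rule rank_le_card_nonzero_columns)
      fix i j assume "\<not> nonzero_col S j"
      then show "(S + t *\<^sub>R (B - S)) $ i $ j = 0"
        using B(2) unfolding nonzero_col_S[symmetric] by (simp add: nonzero_col_def)
    qed
    then show ?thesis using card_nonzero_col_S s_le_r by linarith
  qed
  then have "Y - X \<in> bouligand_tangent (rank_le r) X"
    using orth_rot_in_tangent[of "B - S"] linear_orth_rot[of U V]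
    by (simp add: B(1) X_eq linear_diff)
  then have "- lagr_grad f l A y X \<bullet> (Y - X) \<le> 0"
    using normal unfolding frechet_normal_def by blast
  moreover have "\<forall>i<l. A i \<bullet> (Y - X) = 0"
    using Y X_feas unfolding feas_L_def by (simp add: inner_diff_right)
  then have "(\<Sum>i<l. y i *\<^sub>R A i) \<bullet> (Y - X) = 0" by (simp add: inner_sum_left)
  ultimately have "grad f X \<bullet> (Y - X) \<ge> 0"
    by (simp add: lagr_grad_def inner_diff_left)
  then show ?thesis using convex_on_gradient_ineq[OF cv grad_at_X, of Y] by linarith
qed

text \<open>When s < r, adding a single entry outside the support of S keeps the rank at most r,
  so both signs of every matrix unit are tangent directions and the normal cone is trivial.\<close>

lemma lagr_grad_zero_if_normal:
  assumes "s < r" and normal: "- lagr_grad f l A y X \<in> frechet_normal (rank_le r) X"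
  shows "lagr_grad f l A y X = 0"
proof -
  define w where "w = lagr_grad f l A y X"
  have "coords w $ p $ q = 0" for p q
  proof -
    have "orth_rot U V (c *\<^sub>R matrix_unit p q) \<in> bouligand_tangent (rank_le r) X" for c
      by (intro orth_rot_in_tangent rank_S_plus_column_le[OF \<open>s < r\<close>, where q = q])
        (auto simp: matrix_unit_def)
    then have "- w \<bullet> orth_rot U V (c *\<^sub>R matrix_unit p q) \<le> 0" for c
      using normal unfolding frechet_normal_def w_def by blast
    from this[of 1] this[of "-1"] have "w \<bullet> orth_rot U V (matrix_unit p q) = 0"
      using linear_orth_rot[of U V] by (simp add: linear_scale linear_neg)
    then show ?thesis
      by (metis inner_commute inner_matrix_unit inner_orth_rot)
  qed
  then have "coords w = 0" by (simp add: vec_eq_iff)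
  then show ?thesis using orth_rot_coords[of w] linear_orth_rot[of U V]
    by (simp add: w_def linear_0)
qed

lemma convex_global_min:
  assumes cv: "convex_on UNIV f" and stat: "F_stationary f l A b r X" and "s < r"
  shows "global_min_on f (feas_L l A b \<inter> rank_le r) X"
proof -
  obtain y where "- lagr_grad f l A y X \<in> frechet_normal (rank_le r) X"
    using stat unfolding F_stationary_def by blast
  then have g: "grad f X = - (\<Sum>i<l. y i *\<^sub>R A i)"
    using lagr_grad_zero_if_normal[OF \<open>s < r\<close>] by (simp add: lagr_grad_def eq_neg_iff_add_eq_0)
  have "f X \<le> f Y" if Y: "Y \<in> feas_L l A b \<inter> rank_le r" for Y
  proof -
    have "grad f X \<bullet> (Y - X) = 0"
      using Y X_feas unfolding g feas_L_def by (simp add: inner_diff_right inner_sum_left)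
    then show ?thesis using convex_on_gradient_ineq[OF cv grad_at_X, of Y] by linarith
  qed
  then show ?thesis unfolding global_min_on_def using X_feas by blast
qed

lemma lagr_grad_eq_orth_rot:
  "lagr_grad f l A (\<lambda>i. - c i) X =
   orth_rot U V (coords (grad f X) - (\<Sum>i<l. c i *\<^sub>R coords (A i)))"
  using linear_orth_rot[of U V]
  by (simp add: lagr_grad_def linear_diff linear_sum linear_scale orth_rot_coords sum_negf)

lemma local_min_grad_orth_feasible_line:
  assumes lm: "local_min_on f (feas_L l A b \<inter> rank_le r) X"
    and rank: "\<And>t. rank (S + t *\<^sub>R G) \<le> r" and lin: "\<forall>i<l. coords (A i) \<bullet> G = 0"
  shows "coords (grad f X) \<bullet> G = 0"
proof -
  have "grad f X \<bullet> orth_rot U V G = 0"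
  proof (rule local_min_line_derivative_zero[OF grad_at_X lm])
    fix t
    have "X + t *\<^sub>R orth_rot U V G = orth_rot U V (S + t *\<^sub>R G)"
      unfolding X_eq using linear_orth_rot[of U V] by (simp add: linear_add linear_scale)
    moreover have "\<forall>i<l. coords (A i) \<bullet> (S + t *\<^sub>R G) = b i"
      using lin coords_A_S by (simp add: inner_add_right)
    ultimately show "X + t *\<^sub>R orth_rot U V G \<in> feas_L l A b \<inter> rank_le r"
      using orth_rot_feasible rank by simp
  qed
  then show ?thesis by (metis inner_commute inner_orth_rot)
qed

text \<open>Optimality along the lines S + t G, where G may use one column outside the support of S,
  gives multipliers on the support columns (Assumption 2) and then on every column.\<close>

lemma F_stationary_if_local_min_rank_deficient:
  assumes lm: "local_min_on f (feas_L l A b \<inter> rank_le r) X" and "s < r"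
    and li: "lin_indep_family l (\<lambda>i. R_mat em en s U V (A i))"
  shows "F_stationary f l A b r X"
proof -
  define P where "P M = M ** diag_mask (nonzero_col S)" for M :: "real^'n^'m"
  define W where "W q = {G :: real^'n^'m. \<forall>i j. \<not> (nonzero_col S j \<or> j = q) \<longrightarrow> G$i$j = 0}" for q
  have P: "orth_projection P" unfolding P_def by (rule orth_projection_mult_diag_mask)
  have W: "subspace (W q)" "P x \<in> W q" for q x
    by (auto simp: subspace_def W_def P_def matrix_mult_diag_mask)
  have line: "coords (grad f X) \<bullet> G = 0" if G: "G \<in> W q" "\<forall>i<l. coords (A i) \<bullet> G = 0" for q G
  proof (rule local_min_grad_orth_feasible_line[OF lm _ G(2)])
    show "rank (S + t *\<^sub>R G) \<le> r" for t
      by (rule rank_S_plus_column_le[OF \<open>s < r\<close>, where q = q]) (use G(1) in \<open>simp add: W_def\<close>)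
  qed
  have "\<exists>c. P (coords (grad f X) - (\<Sum>i<l. c i *\<^sub>R coords (A i))) = 0"
  proof (rule orth_projection_multipliers[OF P])
    fix x assume "P x = x" "\<forall>i<l. coords (A i) \<bullet> x = 0"
    then show "coords (grad f X) \<bullet> x = 0"
      using line[where q = undefined and G = x] W(2)[where q = undefined and x = x] by simp
  qed
  then obtain c where c: "P (coords (grad f X) - (\<Sum>i<l. c i *\<^sub>R coords (A i))) = 0" ..
  have li': "lin_indep_family l (\<lambda>i. P (coords (A i)))"
    using li by (simp add: P_def R_mat_eq)
  have "(coords (grad f X) - (\<Sum>i<l. c i *\<^sub>R coords (A i))) $ p $ q = 0" for p q
  proof -
    have "matrix_unit p q \<in> W q" by (simp add: W_def matrix_unit_def)
    from orth_projection_orthogonal_extension[OF P li' W(1) W(2) line refl c this]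
    show ?thesis by (simp add: inner_matrix_unit)
  qed
  then have "coords (grad f X) - (\<Sum>i<l. c i *\<^sub>R coords (A i)) = 0"
    by (simp add: vec_eq_iff del: vector_minus_component)
  then have "lagr_grad f l A (\<lambda>i. - c i) X = 0"
    unfolding lagr_grad_eq_orth_rot using linear_orth_rot[of U V] by (simp add: linear_0)
  then show ?thesis by (rule F_stationary_if_lagr_grad_zero)
qed

lemma local_min_grad_orth_tangent_direction:
  assumes lm: "local_min_on f (feas_L l A b \<inter> rank_le r) X"
    and PD: "\<forall>k<l. tangent_proj S (D k) = D k"
    and dual: "\<forall>i<l. \<forall>k<l. coords (A i) \<bullet> D k = (if i = k then 1 else 0)"
    and PH: "tangent_proj S H = H" and lin: "\<forall>i<l. coords (A i) \<bullet> H = 0"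
  shows "coords (grad f X) \<bullet> H = 0"
proof -
  have "rank (monomial_pinv S) \<le> r"
    using rank_monomial_pinv_le[of S] card_nonzero_row_S s_le_r by linarith
  have nonneg: "grad f X \<bullet> orth_rot U V G \<ge> 0"
    if PG: "tangent_proj S G = G" and linG: "\<forall>i<l. coords (A i) \<bullet> G = 0" for G
  proof -
    obtain \<delta> C where "\<delta> > 0" and curve: "\<And>t. 0 < t \<Longrightarrow> t < \<delta> \<Longrightarrow> \<exists>W.
        rank (S + t *\<^sub>R G + W) \<le> rank (monomial_pinv S) \<and>
        (\<forall>i<l. coords (A i) \<bullet> (t *\<^sub>R G + W) = 0) \<and> norm W \<le> C * t\<^sup>2"
      using monomial_rank_curve[OF monomial_S PG PD dual linG] by blast
    show ?thesis
    proof (rule local_min_curve_derivative_nonneg[OF grad_at_X lm \<open>\<delta> > 0\<close>])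
      fix t :: real assume "0 < t" "t < \<delta>"
      then obtain W where W: "rank (S + t *\<^sub>R G + W) \<le> rank (monomial_pinv S)"
        "\<forall>i<l. coords (A i) \<bullet> (t *\<^sub>R G + W) = 0" "norm W \<le> C * t\<^sup>2"
        using curve by blast
      have "X + t *\<^sub>R orth_rot U V G + orth_rot U V W = orth_rot U V (S + t *\<^sub>R G + W)"
        unfolding X_eq using linear_orth_rot[of U V] by (simp add: linear_add linear_scale)
      moreover have "\<forall>i<l. coords (A i) \<bullet> (S + t *\<^sub>R G + W) = b i"
        using W(2) coords_A_S by (simp add: inner_add_right add.assoc)
      moreover have "rank (S + t *\<^sub>R G + W) \<le> r"
        using W(1) \<open>rank (monomial_pinv S) \<le> r\<close> by linarith
      ultimately have "X + t *\<^sub>R orth_rot U V G + orth_rot U V W \<in> feas_L l A b \<inter> rank_le r"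
        using orth_rot_feasible by simp
      then show "\<exists>W. X + t *\<^sub>R orth_rot U V G + W \<in> feas_L l A b \<inter> rank_le r \<and> norm W \<le> C * t\<^sup>2"
        using W(3) norm_orth_rot[OF orthogonal_U orthogonal_V, of W] by auto
    qed
  qed
  have "grad f X \<bullet> orth_rot U V H \<ge> 0" using nonneg[OF PH lin] .
  moreover have "grad f X \<bullet> orth_rot U V (- H) \<ge> 0"
    using nonneg orth_projection_linear[OF orth_projection_tangent_proj, of S] PH lin
    by (simp add: linear_neg)
  ultimately have "grad f X \<bullet> orth_rot U V H = 0"
    using linear_orth_rot[of U V] by (simp add: linear_neg)
  then show ?thesis by (metis inner_commute inner_orth_rot)
qed

lemma coords_tangent_block_zero:
  assumes "s = r" "\<Xi> \<in> bouligand_tangent (rank_le r) X"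
    and "\<not> nonzero_row S p" "\<not> nonzero_col S q"
  shows "coords \<Xi> $ p $ q = 0"
proof (rule bouligand_tangent_monomial_block_zero[OF monomial_S _ assms(3,4)])
  have "bounded_linear coords" using linear_orth_rot linear_conv_bounded_linear by blast
  from bouligand_tangent_linear_image[OF this assms(2)]
  have "coords \<Xi> \<in> bouligand_tangent (coords ` rank_le r) S" by (simp add: coords_X)
  moreover have "coords ` rank_le r \<subseteq> {Z. rank Z \<le> rank S}"
  proof
    fix Z assume "Z \<in> coords ` rank_le r"
    then obtain Y where "Z = coords Y" "rank Y \<le> r" unfolding rank_le_def by blast
    then show "Z \<in> {Z. rank Z \<le> rank S}"
      using rank_orth_rot_le[of "transpose U" "transpose V" Y] s_le_rank_S assms(1) by simp
  qed
  ultimately show "coords \<Xi> \<in> bouligand_tangent {Z. rank Z \<le> rank S} S"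
    using bouligand_tangent_mono by blast
qed

text \<open>For s = r, tangent directions have zero coordinates on the block of zero rows and columns
  of S, and optimality along the curves of monomial_rank_curve kills the remaining coordinates of
  the reduced gradient up to multipliers.\<close>

lemma F_stationary_if_local_min_full_rank:
  assumes lm: "local_min_on f (feas_L l A b \<inter> rank_le r) X" and "s = r"
    and li: "lin_indep_family l (\<lambda>i. T_mat em en s U V (A i))"
  shows "F_stationary f l A b r X"
proof -
  note P = orth_projection_tangent_proj[of S]
  have li': "lin_indep_family l (\<lambda>i. tangent_proj S (coords (A i)))"
    using li by (simp add: T_mat_eq)
  obtain D where D: "\<forall>k<l. tangent_proj S (D k) = D k \<and>
      (\<forall>i<l. coords (A i) \<bullet> D k = (if i = k then 1 else 0))"
    using orth_projection_dual_family[OF P li'] by blast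
  have "\<exists>c. tangent_proj S (coords (grad f X) - (\<Sum>i<l. c i *\<^sub>R coords (A i))) = 0"
  proof (rule orth_projection_multipliers[OF P])
    fix H assume "tangent_proj S H = H" "\<forall>i<l. coords (A i) \<bullet> H = 0"
    moreover have "\<forall>k<l. tangent_proj S (D k) = D k"
      and "\<forall>i<l. \<forall>k<l. coords (A i) \<bullet> D k = (if i = k then 1 else 0)"
      using D by blast+
    ultimately show "coords (grad f X) \<bullet> H = 0"
      using local_min_grad_orth_tangent_direction[OF lm] by blast
  qed
  then obtain c where c: "tangent_proj S (coords (grad f X) - (\<Sum>i<l. c i *\<^sub>R coords (A i))) = 0" ..
  have "- lagr_grad f l A (\<lambda>i. - c i) X \<bullet> \<Xi> \<le> 0"
    if "\<Xi> \<in> bouligand_tangent (rank_le r) X" for \<Xi>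
  proof -
    have "(coords (grad f X) - (\<Sum>i<l. c i *\<^sub>R coords (A i))) \<bullet> coords \<Xi> = 0"
      by (rule inner_eq_zero_if_tangent_proj_zero[OF c coords_tangent_block_zero[OF \<open>s = r\<close> that]])
    then show ?thesis by (simp add: lagr_grad_eq_orth_rot inner_orth_rot)
  qed
  then show ?thesis using X_feas unfolding F_stationary_def frechet_normal_def by blast
qed

end

theorem theorem4p1:
  fixes f :: "real^'n^'m \<Rightarrow> real"
    and A :: "nat \<Rightarrow> real^'n^'m" and b :: "nat \<Rightarrow> real" and l r s :: nat
    and X :: "real^'n^'m" and U :: "real^'m^'m" and S :: "real^'n^'m" and V :: "real^'n^'n"
    and em :: "nat \<Rightarrow> 'm" and en :: "nat \<Rightarrow> 'n"
  assumes dims: "r < CARD('n)" "CARD('n) \<le> CARD('m)"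
    and f_C1: "cont_diff f"
    and em: "bij_betw em {..<CARD('m)} UNIV" and en: "bij_betw en {..<CARD('n)} UNIV"
    and X_feas: "X \<in> feas_L l A b \<inter> rank_le r"
    and s_def: "s = rank X"
    and svd: "is_svd em en X U S V s"
  shows
    "(local_min_on f (feas_L l A b \<inter> rank_le r) X \<longrightarrow>
       ((s = r \<and> lin_indep_family l (\<lambda>i. T_mat em en s U V (A i))) \<or>
        (s < r \<and> lin_indep_family l (\<lambda>i. R_mat em en s U V (A i)))) \<longrightarrow>
       F_stationary f l A b r X)
   \<and> (convex_on UNIV f \<longrightarrow> F_stationary f l A b r X \<longrightarrow>
       (s = r \<longrightarrow> (\<forall>Y \<in> feas_L l A b \<inter> M_Gamma en s U V. f X \<le> f Y)) \<and>
       (s < r \<longrightarrow> global_min_on f (feas_L l A b \<inter> rank_le r) X))"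
proof -
  interpret rank_moa_point f A b l r s X U S V em en
    using assms by (rule rank_moa_point.intro)
  show ?thesis
    using F_stationary_if_local_min_full_rank F_stationary_if_local_min_rank_deficient
      convex_min_on_M_Gamma convex_global_min by blast
qed

end
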